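(* For any $b$-braids $\alpha,\beta,\gamma\in B_b$, $|\sigma(\alpha\gamma\beta)-\sigma(\alpha\beta)-\sigma(\gamma)|\leq b-1$.
   Context: $B_b$ is the braid group on $b$ strands. For a braid $\beta$, $\sigma(\beta)$ is the signature of the standard closure of $\beta$, with all strands oriented in the same direction. The sign convention is such that $\sigma(a_1^n)=1-n$ for $n\ge1$. *)

theory Defs
  imports "Jordan_Normal_Form.Char_Poly"
begin

(* A braid word on b strands is a list of nonzero integers;
   the letter k stands for the Artin generator a_{|k|}^{sgn k}, 1 <= |k| <= b-1.
   The product of braids is concatenation of words. *)

definition braid_word :: "nat \<Rightarrow> int list \<Rightarrow> bool" where
  "braid_word b w \<longleftrightarrow> (\<forall>x\<in>set w. x \<noteq> 0 \<and> \<bar>x\<bar> < int b)"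

(* Canonical Seifert surface of the closure (Seifert's algorithm on the closed
   braid diagram: b stacked disks, one half-twisted band per letter).
   A basis of H_1 consists of the loops through two consecutive bands
   (positions p < q) of the same generator a_i. *)

definition braid_loops :: "int list \<Rightarrow> (nat \<times> nat) list" where
  "braid_loops w = [(p, q). p \<leftarrow> [0..<length w], q \<leftarrow> [Suc p..<length w],
      \<bar>w ! q\<bar> = \<bar>w ! p\<bar> \<and> (\<forall>r. p < r \<and> r < q \<longrightarrow> \<bar>w ! r\<bar> \<noteq> \<bar>w ! p\<bar>)]"

(* entry of the symmetrised Seifert form V + V^T on two basis loops *)
definition seifert_sym_entry :: "int list \<Rightarrow> nat \<times> nat \<Rightarrow> nat \<times> nat \<Rightarrow> int" where
  "seifert_sym_entry w l1 l2 =
     (let (p, q) = l1; (r, s) = l2; e = (\<lambda>k. sgn (w ! k)) in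
      if l1 = l2 then - (e p + e q)
      else if q = r then e q
      else if s = p then e p
      else if \<bar>w ! r\<bar> = \<bar>w ! p\<bar> + 1 then
        (if p < r \<and> r < q \<and> q < s then 1 else if r < p \<and> p < s \<and> s < q then -1 else 0)
      else if \<bar>w ! p\<bar> = \<bar>w ! r\<bar> + 1 then
        (if r < p \<and> p < s \<and> s < q then 1 else if p < r \<and> r < q \<and> q < s then -1 else 0)
      else 0)"

definition seifert_sym_matrix :: "int list \<Rightarrow> int mat" where
  "seifert_sym_matrix w =
     (let L = braid_loops w in
      mat (length L) (length L) (\<lambda>(i, j). seifert_sym_entry w (L ! i) (L ! j)))"

definition mat_signature :: "real mat \<Rightarrow> int" where
  "mat_signature A =
     int (\<Sum>x\<in>{x. 0 < x \<and> poly (char_poly A) x = 0}. order x (char_poly A))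
   - int (\<Sum>x\<in>{x. x < 0 \<and> poly (char_poly A) x = 0}. order x (char_poly A))"

(* signature of the closure of the braid (all strands oriented the same way) *)
definition braid_signature :: "int list \<Rightarrow> int" where
  "braid_signature w = mat_signature (map_mat real_of_int (seifert_sym_matrix w))"

end

theory Submission
  imports Defs
begin

(* The symmetrised Seifert matrix of the closure of a braid word w is the Gram matrix of the
   loops of w, i.e. of the differences e_p - e_q of consecutive bands p < q of the same
   generator, for an explicit symmetric form on the bands.  The loops of \<alpha>\<beta> and of \<gamma>,
   placed inside \<alpha>\<gamma>\<beta>, span a sublattice of the loop lattice of \<alpha>\<gamma>\<beta> whose corank is the
   number of generators occurring both in \<alpha>\<beta> and in \<gamma>, hence at most b - 1; on it the form
   is the orthogonal sum of the forms of \<alpha>\<beta> and of \<gamma>, because a band outside \<gamma> lies on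
   the same side of both ends of a loop of \<gamma>.  By Sylvester's law of inertia, restricting a
   symmetric form to a subspace of codimension k changes its signature by at most k. *)

section \<open>Quadratic forms and congruence\<close>

definition quad_form :: "'a::comm_ring_1 mat \<Rightarrow> 'a vec \<Rightarrow> 'a" where
  "quad_form G x = x \<bullet> (G *\<^sub>v x)"

lemma quad_form_uminus_vec:
  assumes "G \<in> carrier_mat n n" and "x \<in> carrier_vec n"
  shows "quad_form G (- x) = quad_form G x"
proof -
  have "G *\<^sub>v (- x) = - (G *\<^sub>v x)"
    using assms by (intro eq_vecI) (auto simp: scalar_prod_uminus_right)
  thus ?thesis unfolding quad_form_def using assms
    by (simp add: scalar_prod_uminus_left scalar_prod_uminus_right)
qed

lemma quad_form_congruence:
  assumes N: "N \<in> carrier_mat n n" and P: "P \<in> carrier_mat n m" and x: "x \<in> carrier_vec m"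
  shows "quad_form (transpose_mat P * N * P) x = quad_form N (P *\<^sub>v x)"
proof -
  have "(transpose_mat P * N * P) *\<^sub>v x = (transpose_mat P * N) *\<^sub>v (P *\<^sub>v x)"
    by (rule assoc_mult_mat_vec) (use N P x in auto)
  also have "\<dots> = transpose_mat P *\<^sub>v (N *\<^sub>v (P *\<^sub>v x))"
    by (rule assoc_mult_mat_vec) (use N P x in auto)
  finally have "quad_form (transpose_mat P * N * P) x = x \<bullet> (transpose_mat P *\<^sub>v (N *\<^sub>v (P *\<^sub>v x)))"
    unfolding quad_form_def by simp
  also have "\<dots> = (transpose_mat P *\<^sub>v (N *\<^sub>v (P *\<^sub>v x))) \<bullet> x"
    by (rule comm_scalar_prod[of _ m]) (use N P x in auto)
  also have "\<dots> = (N *\<^sub>v (P *\<^sub>v x)) \<bullet> (P *\<^sub>v x)"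
    by (rule transpose_vec_mult_scalar) (use N P x in auto)
  also have "\<dots> = quad_form N (P *\<^sub>v x)" unfolding quad_form_def
    by (rule comm_scalar_prod[of _ n]) (use N P x in auto)
  finally show ?thesis .
qed

lemma exists_nonzero_kernel_vec:
  fixes A :: "'a::field mat"
  assumes A: "A \<in> carrier_mat n k" and lt: "n < k"
  shows "\<exists>v \<in> carrier_vec k. v \<noteq> 0\<^sub>v k \<and> A *\<^sub>v v = 0\<^sub>v n"
proof -
  define c where "c i = (if i < n then row A i else 0\<^sub>v k)" for i
  define B where "B = mat\<^sub>r k k (\<lambda>i. if i = k - 1 then 0\<^sub>v k else c i)"
  have B: "B \<in> carrier_mat k k" unfolding B_def by auto
  have "det B = 0" unfolding B_def by (rule det_row_0) (use lt A in \<open>auto simp: c_def\<close>)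
  then obtain v where v: "v \<in> carrier_vec k" "v \<noteq> 0\<^sub>v k" "B *\<^sub>v v = 0\<^sub>v k"
    using det_0_iff_vec_prod_zero_field[OF B] by auto
  have "A *\<^sub>v v = 0\<^sub>v n"
  proof (rule eq_vecI)
    fix i assume "i < dim_vec (0\<^sub>v n :: 'a vec)"
    hence i: "i < n" by auto
    have "row A i \<bullet> v = (B *\<^sub>v v) $ i" using i lt A unfolding B_def c_def by auto
    thus "(A *\<^sub>v v) $ i = 0\<^sub>v n $ i" using v(3) i lt A by auto
  qed (use A in auto)
  thus ?thesis using v by auto
qed

lemma mult_mat_vec_unit_vec:
  fixes A :: "'a::comm_ring_1 mat"
  assumes A: "A \<in> carrier_mat n k" and j: "j < k"
  shows "A *\<^sub>v unit_vec k j = col A j"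
proof (rule eq_vecI)
  fix i assume "i < dim_vec (col A j)"
  thus "(A *\<^sub>v unit_vec k j) $ i = col A j $ i"
    using A j scalar_prod_right_unit[OF j, of "row A i"] by auto
qed (use A in auto)

lemma exists_mat_mult_eq_if_cols_in_range:
  fixes D E :: "'a::comm_ring_1 mat"
  assumes D: "D \<in> carrier_mat n k" and E: "E \<in> carrier_mat n m"
    and cols: "\<And>j. j < m \<Longrightarrow> \<exists>y \<in> carrier_vec k. D *\<^sub>v y = col E j"
  shows "\<exists>P \<in> carrier_mat k m. D * P = E"
proof -
  obtain f where f: "\<And>j. j < m \<Longrightarrow> f j \<in> carrier_vec k \<and> D *\<^sub>v f j = col E j"
    using cols by metis
  define P where "P = mat k m (\<lambda>(i, j). f j $ i)"
  have col_P: "col P j = f j" if "j < m" for j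
    using f[OF that] that unfolding P_def by (intro eq_vecI) auto
  have "D * P = E"
  proof (rule eq_matI)
    fix i j assume "i < dim_row E" "j < dim_col E"
    hence i: "i < n" and j: "j < m" using E by auto
    have "(D * P) $$ (i, j) = (D *\<^sub>v col P j) $ i" using D i j by (simp add: P_def)
    thus "(D * P) $$ (i, j) = E $$ (i, j)" using f[OF j] col_P[OF j] E i j by simp
  qed (use D E in \<open>auto simp: P_def\<close>)
  thus ?thesis by (intro bexI[of _ P]) (auto simp: P_def)
qed

lemma congruence_entry:
  fixes A G :: "'a::comm_ring_1 mat"
  assumes A: "A \<in> carrier_mat n k" and G: "G \<in> carrier_mat n n" and i: "i < k" and j: "j < k"
  shows "(transpose_mat A * G * A) $$ (i, j) = col A i \<bullet> (G *\<^sub>v col A j)"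
proof -
  have "transpose_mat A * G * A = transpose_mat A * (G * A)" using A G by (simp add: assoc_mult_mat)
  hence "(transpose_mat A * G * A) $$ (i, j) = row (transpose_mat A) i \<bullet> col (G * A) j"
    using A G i j by simp
  also have "row (transpose_mat A) i = col A i" using A i by simp
  also have "col (G * A) j = G *\<^sub>v col A j" by (rule col_mult2[OF G A j])
  finally show ?thesis .
qed

lemma congruence_mult:
  fixes P D G :: "'a::comm_ring_1 mat"
  assumes P: "P \<in> carrier_mat n m" and D: "D \<in> carrier_mat k n" and G: "G \<in> carrier_mat k k"
  shows "transpose_mat P * (transpose_mat D * G * D) * P = transpose_mat (D * P) * G * (D * P)"
proof -
  have Pt: "transpose_mat P \<in> carrier_mat m n" and Dt: "transpose_mat D \<in> carrier_mat n k"
    using P D by auto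
  have DG: "transpose_mat D * G \<in> carrier_mat n k" using Dt G by auto
  have "transpose_mat P * (transpose_mat D * G * D) * P = transpose_mat P * (transpose_mat D * G) * (D * P)"
    using assoc_mult_mat[OF Pt DG D] assoc_mult_mat[OF mult_carrier_mat[OF Pt DG] D P] by simp
  also have "transpose_mat P * (transpose_mat D * G) = transpose_mat (D * P) * G"
    using assoc_mult_mat[OF Pt Dt G] transpose_mult[OF D P] by simp
  finally show ?thesis .
qed

lemma symmetric_congruence:
  fixes A P :: "'a::comm_ring_1 mat"
  assumes A: "A \<in> carrier_mat n n" and sym: "transpose_mat A = A" and P: "P \<in> carrier_mat n m"
  shows "transpose_mat (transpose_mat P * A * P) = transpose_mat P * A * P"
proof -
  have "transpose_mat (transpose_mat P * A * P) = transpose_mat P * transpose_mat (transpose_mat P * A)"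
    by (rule transpose_mult) (use A P in auto)
  also have "transpose_mat (transpose_mat P * A) = A * P"
    using transpose_mult[of "transpose_mat P" m n A n] A P sym by auto
  finally show ?thesis using A P by (simp add: assoc_mult_mat[of _ m n _ n _ m])
qed

lemma exists_nonzero_kernel_pair:
  fixes U W :: "'a::field mat"
  assumes U: "U \<in> carrier_mat n p" and W: "W \<in> carrier_mat n q" and lt: "n < p + q"
  shows "\<exists>a \<in> carrier_vec p. \<exists>b \<in> carrier_vec q.
           (a \<noteq> 0\<^sub>v p \<or> b \<noteq> 0\<^sub>v q) \<and> U *\<^sub>v a + W *\<^sub>v b = 0\<^sub>v n"
proof -
  define C where "C = mat n (p + q) (\<lambda>(i, j). if j < p then U $$ (i, j) else W $$ (i, j - p))"
  have C: "C \<in> carrier_mat n (p + q)" unfolding C_def by auto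
  obtain v where v: "v \<in> carrier_vec (p + q)" "v \<noteq> 0\<^sub>v (p + q)" "C *\<^sub>v v = 0\<^sub>v n"
    using exists_nonzero_kernel_vec[OF C lt] by auto
  define a where "a = vec p (\<lambda>j. v $ j)"
  define b where "b = vec q (\<lambda>j. v $ (p + j))"
  have "C *\<^sub>v v = U *\<^sub>v a + W *\<^sub>v b"
  proof (rule eq_vecI)
    fix i assume "i < dim_vec (U *\<^sub>v a + W *\<^sub>v b)"
    hence i: "i < n" using U W by auto
    have "(C *\<^sub>v v) $ i = (\<Sum>j<p + q. C $$ (i, j) * v $ j)"
      using C v(1) i by (auto simp: scalar_prod_def lessThan_atLeast0)
    also have "\<dots> = (\<Sum>j<p. C $$ (i, j) * v $ j) + (\<Sum>j<q. C $$ (i, p + j) * v $ (p + j))"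
      by (induct q) (simp_all add: ac_simps)
    also have "\<dots> = (\<Sum>j<p. U $$ (i, j) * a $ j) + (\<Sum>j<q. W $$ (i, j) * b $ j)"
      unfolding C_def a_def b_def using i by (auto intro!: sum.cong)
    also have "\<dots> = (U *\<^sub>v a + W *\<^sub>v b) $ i"
      using U W i by (auto simp: a_def b_def scalar_prod_def lessThan_atLeast0)
    finally show "(C *\<^sub>v v) $ i = (U *\<^sub>v a + W *\<^sub>v b) $ i" .
  qed (use C U W in auto)
  moreover have "a \<noteq> 0\<^sub>v p \<or> b \<noteq> 0\<^sub>v q"
  proof (rule ccontr)
    assume "\<not> (a \<noteq> 0\<^sub>v p \<or> b \<noteq> 0\<^sub>v q)"
    hence a0: "a = 0\<^sub>v p" and b0: "b = 0\<^sub>v q" by auto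
    have "v $ j = 0" if "j < p + q" for j
    proof (cases "j < p")
      case True
      thus ?thesis using arg_cong[OF a0, of "\<lambda>x. x $ j"] unfolding a_def by simp
    next
      case False
      hence "p + (j - p) = j" by simp
      thus ?thesis using arg_cong[OF b0, of "\<lambda>x. x $ (j - p)"] False that unfolding b_def by simp
    qed
    thus False using v(1,2) by (auto intro!: eq_vecI)
  qed
  ultimately show ?thesis using v(3) unfolding a_def b_def by force
qed

text \<open>A positive definite and a nonpositive subspace meet trivially.\<close>

lemma pos_nonpos_dim_bound:
  fixes G :: "'a::linordered_field mat"
  assumes G: "G \<in> carrier_mat n n" and U: "U \<in> carrier_mat n p" and W: "W \<in> carrier_mat n q"
    and pos: "\<And>a. a \<in> carrier_vec p \<Longrightarrow> a \<noteq> 0\<^sub>v p \<Longrightarrow> quad_form G (U *\<^sub>v a) > 0"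
    and nonpos: "\<And>b. b \<in> carrier_vec q \<Longrightarrow> quad_form G (W *\<^sub>v b) \<le> 0"
    and W_inj: "\<And>b. b \<in> carrier_vec q \<Longrightarrow> W *\<^sub>v b = 0\<^sub>v n \<Longrightarrow> b = 0\<^sub>v q"
  shows "p + q \<le> n"
proof (rule ccontr)
  assume "\<not> p + q \<le> n"
  then obtain a b where a: "a \<in> carrier_vec p" and b: "b \<in> carrier_vec q"
    and nonzero: "a \<noteq> 0\<^sub>v p \<or> b \<noteq> 0\<^sub>v q" and sum0: "U *\<^sub>v a + W *\<^sub>v b = 0\<^sub>v n"
    using exists_nonzero_kernel_pair[OF U W] by force
  show False
  proof (cases "a = 0\<^sub>v p")
    case False
    have "U *\<^sub>v a = - (W *\<^sub>v b)"
    proof (rule eq_vecI)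
      fix i assume "i < dim_vec (- (W *\<^sub>v b))"
      moreover from this have "(U *\<^sub>v a + W *\<^sub>v b) $ i = 0" using sum0 W by simp
      ultimately show "(U *\<^sub>v a) $ i = (- (W *\<^sub>v b)) $ i" using U W by simp
    qed (use U W in auto)
    hence "quad_form G (U *\<^sub>v a) = quad_form G (W *\<^sub>v b)"
      using quad_form_uminus_vec[OF G, of "W *\<^sub>v b"] W b by simp
    thus False using pos[OF a False] nonpos[OF b] by simp
  next
    case True
    hence "U *\<^sub>v a = 0\<^sub>v n" using U by auto
    hence "W *\<^sub>v b = 0\<^sub>v n" using sum0 U W a b by auto
    thus False using W_inj[OF b] True nonzero by simp
  qed
qed

section \<open>The spectral theorem for real symmetric matrices\<close>

definition orthonormal_mat :: "nat \<Rightarrow> 'a::comm_ring_1 mat \<Rightarrow> bool" where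
  "orthonormal_mat n Q \<longleftrightarrow> Q \<in> carrier_mat n n \<and> transpose_mat Q * Q = 1\<^sub>m n"

lemma orthonormal_mat_right_inverse:
  fixes Q :: "'a::field mat"
  assumes "orthonormal_mat n Q" shows "Q * transpose_mat Q = 1\<^sub>m n"
  using assms mat_mult_left_right_inverse[of "transpose_mat Q" n Q] unfolding orthonormal_mat_def by auto

lemma orthonormal_mat_mult_vec_eq_0:
  fixes Q :: "'a::comm_ring_1 mat"
  assumes Q: "orthonormal_mat n Q" and y: "y \<in> carrier_vec n" and Qy: "Q *\<^sub>v y = 0\<^sub>v n"
  shows "y = 0\<^sub>v n"
proof -
  have "transpose_mat Q *\<^sub>v (Q *\<^sub>v y) = y"
    using Q y unfolding orthonormal_mat_def by (simp add: assoc_mult_mat_vec[symmetric, of _ n n _ n])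
  thus ?thesis using Q unfolding Qy orthonormal_mat_def by auto
qed

definition diag_list :: "'a::zero list \<Rightarrow> 'a mat" where
  "diag_list d = mat (length d) (length d) (\<lambda>(i, j). if i = j then d ! i else 0)"

lemma diag_list_carrier: "diag_list d \<in> carrier_mat (length d) (length d)"
  unfolding diag_list_def by auto

lemma diag_mat_diag_list: "diag_mat (diag_list d) = d"
  unfolding diag_mat_def diag_list_def by (rule nth_equalityI) auto

lemma diag_list_map_uminus:
  fixes d :: "'a::group_add list"
  shows "diag_list (map uminus d) = - diag_list d"
  unfolding diag_list_def by (rule eq_matI) auto

lemma quad_form_diag_list:
  assumes y: "y \<in> carrier_vec (length d)"
  shows "quad_form (diag_list d) y = (\<Sum>i<length d. d ! i * (y $ i)\<^sup>2)"
proof -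
  have Dy: "(diag_list d *\<^sub>v y) $ i = d ! i * y $ i" if "i < length d" for i
  proof -
    have "(diag_list d *\<^sub>v y) $ i = (\<Sum>j\<in>{0..<length d}. (if i = j then d ! i else 0) * y $ j)"
      using that y unfolding diag_list_def by (simp add: scalar_prod_def)
    also have "\<dots> = (\<Sum>j\<in>{0..<length d}. if i = j then d ! i * y $ j else 0)"
      by (rule sum.cong) auto
    finally show ?thesis using that by simp
  qed
  have "quad_form (diag_list d) y = (\<Sum>i<length d. y $ i * (diag_list d *\<^sub>v y) $ i)"
    using y diag_list_carrier[of d] unfolding quad_form_def
    by (simp add: scalar_prod_def lessThan_atLeast0 del: index_mult_mat_vec)
  thus ?thesis by (simp add: Dy power2_eq_square ac_simps)
qed

definition block_diag_cons :: "'a::zero \<Rightarrow> 'a mat \<Rightarrow> 'a mat" where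
  "block_diag_cons a M = mat (Suc (dim_row M)) (Suc (dim_col M))
     (\<lambda>(i, j). if i = 0 \<and> j = 0 then a else if i = 0 \<or> j = 0 then 0 else M $$ (i - 1, j - 1))"

lemma block_diag_cons_carrier:
  "M \<in> carrier_mat n m \<Longrightarrow> block_diag_cons a M \<in> carrier_mat (Suc n) (Suc m)"
  unfolding block_diag_cons_def by auto

lemma block_diag_cons_mult:
  fixes M N :: "'a::comm_ring_1 mat"
  assumes M: "M \<in> carrier_mat n m" and N: "N \<in> carrier_mat m k"
  shows "block_diag_cons a M * block_diag_cons b N = block_diag_cons (a * b) (M * N)"
proof (rule eq_matI)
  fix i j assume "i < dim_row (block_diag_cons (a * b) (M * N))" "j < dim_col (block_diag_cons (a * b) (M * N))"
  hence i: "i < Suc n" and j: "j < Suc k" using M N unfolding block_diag_cons_def by auto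
  have "(block_diag_cons a M * block_diag_cons b N) $$ (i, j)
      = (\<Sum>l<Suc m. block_diag_cons a M $$ (i, l) * block_diag_cons b N $$ (l, j))"
    using M N i j by (simp add: block_diag_cons_def scalar_prod_def lessThan_atLeast0)
  also have "\<dots> = block_diag_cons a M $$ (i, 0) * block_diag_cons b N $$ (0, j)
      + (\<Sum>l<m. block_diag_cons a M $$ (i, Suc l) * block_diag_cons b N $$ (Suc l, j))"
    by (rule sum.lessThan_Suc_shift)
  also have "\<dots> = block_diag_cons (a * b) (M * N) $$ (i, j)"
    using M N i j by (cases i; cases j) (auto simp: block_diag_cons_def scalar_prod_def lessThan_atLeast0)
  finally show "(block_diag_cons a M * block_diag_cons b N) $$ (i, j) = block_diag_cons (a * b) (M * N) $$ (i, j)" .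
qed (use M N in \<open>auto simp: block_diag_cons_def\<close>)

lemma transpose_block_diag_cons: "transpose_mat (block_diag_cons a M) = block_diag_cons a (transpose_mat M)"
  unfolding block_diag_cons_def by (rule eq_matI) auto

lemma block_diag_cons_one: "block_diag_cons 1 (1\<^sub>m n) = 1\<^sub>m (Suc n)"
  unfolding block_diag_cons_def by (rule eq_matI) auto

lemma diag_list_Cons: "diag_list (a # d) = block_diag_cons a (diag_list d)"
  unfolding diag_list_def block_diag_cons_def by (rule eq_matI) auto

lemma householder_orthonormal:
  fixes u :: "real vec"
  assumes u: "u \<in> carrier_vec n" and u0: "u $ 0 \<noteq> 0" and uu: "u \<bullet> u = 2 * u $ 0"
  shows "orthonormal_mat n (mat n n (\<lambda>(i, j). (if i = j then 1 else 0) - u $ i * u $ j / u $ 0))"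
    (is "orthonormal_mat n ?W")
proof -
  have W: "?W \<in> carrier_mat n n" by auto
  have uu': "(\<Sum>k<n. u $ k * u $ k) = 2 * u $ 0" using u uu by (simp add: scalar_prod_def lessThan_atLeast0)
  have "transpose_mat ?W * ?W = 1\<^sub>m n"
  proof (rule eq_matI)
    fix i j assume "i < dim_row (1\<^sub>m n)" "j < dim_col (1\<^sub>m n)"
    hence i: "i < n" and j: "j < n" by auto
    let ?c = "1 / u $ 0"
    have "(transpose_mat ?W * ?W) $$ (i, j) = (\<Sum>k<n. ?W $$ (k, i) * ?W $$ (k, j))"
      using W i j by (simp add: scalar_prod_def lessThan_atLeast0)
    also have "\<dots> = (\<Sum>k<n. (if k = i then (if i = j then 1 else 0) else 0)
         - (if k = i then ?c * u $ i * u $ j else 0) - (if k = j then ?c * u $ j * u $ i else 0)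
         + ?c * ?c * u $ i * u $ j * (u $ k * u $ k))"
      using i j by (intro sum.cong) (auto simp: algebra_simps)
    also have "\<dots> = (if i = j then 1 else 0) - ?c * u $ i * u $ j - ?c * u $ j * u $ i
         + ?c * ?c * u $ i * u $ j * (\<Sum>k<n. u $ k * u $ k)"
      using i j by (simp add: sum.distrib sum_subtractf sum_distrib_left)
    also have "\<dots> = (if i = j then 1 else 0)" unfolding uu' using u0 by (simp add: field_simps)
    finally show "(transpose_mat ?W * ?W) $$ (i, j) = 1\<^sub>m n $$ (i, j)" using i j by simp
  qed (use W in auto)
  thus ?thesis using W unfolding orthonormal_mat_def by simp
qed

text \<open>Unless \<open>v = e\<^sub>0\<close>, the Householder reflection along \<open>e\<^sub>0 - v\<close> swaps \<open>e\<^sub>0\<close> and \<open>v\<close>.\<close>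

lemma unit_vec_orthonormal_completion:
  fixes v :: "real vec"
  assumes v: "v \<in> carrier_vec n" and n: "0 < n" and vv: "v \<bullet> v = 1"
  shows "\<exists>W. orthonormal_mat n W \<and> col W 0 = v"
proof (cases "v $ 0 = 1")
  case True
  have "v \<bullet> v = (\<Sum>i<n. v $ i * v $ i)" using v by (simp add: scalar_prod_def lessThan_atLeast0)
  also have "\<dots> = v $ 0 * v $ 0 + (\<Sum>i<n - 1. v $ Suc i * v $ Suc i)"
    using n sum.lessThan_Suc_shift[of "\<lambda>i. v $ i * v $ i" "n - 1"] by simp
  finally have "(\<Sum>i<n - 1. v $ Suc i * v $ Suc i) = 0" using vv True by simp
  hence z: "\<forall>i\<in>{..<n - 1}. v $ Suc i * v $ Suc i = 0"
    by (subst sum_nonneg_eq_0_iff[symmetric]) auto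
  have "v = unit_vec n 0"
  proof (rule eq_vecI)
    fix i assume "i < dim_vec (unit_vec n 0)"
    thus "v $ i = unit_vec n 0 $ i" using True z by (cases i) auto
  qed (use v in auto)
  thus ?thesis using n by (intro exI[of _ "1\<^sub>m n"]) (auto simp: orthonormal_mat_def)
next
  case False
  define u where "u = vec n (\<lambda>i. (if i = 0 then 1 else 0) - v $ i)"
  have u: "u \<in> carrier_vec n" and u0: "u $ 0 = 1 - v $ 0" unfolding u_def using n by auto
  have "u \<bullet> u = (\<Sum>k<n. (if k = 0 then 1 else 0) - (if k = 0 then 2 * v $ 0 else 0) + v $ k * v $ k)"
    unfolding u_def by (auto simp: scalar_prod_def lessThan_atLeast0 algebra_simps intro!: sum.cong)
  also have "\<dots> = 1 - 2 * v $ 0 + v \<bullet> v"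
    using n v by (simp add: sum.distrib sum_subtractf scalar_prod_def lessThan_atLeast0)
  finally have "u \<bullet> u = 2 * u $ 0" using vv u0 by simp
  moreover have "u $ 0 \<noteq> 0" using u0 False by simp
  moreover have "col (mat n n (\<lambda>(i, j). (if i = j then 1 else 0) - u $ i * u $ j / u $ 0)) 0 = v"
    using v n \<open>u $ 0 \<noteq> 0\<close> by (intro eq_vecI) (auto simp: u_def)
  ultimately show ?thesis using householder_orthonormal[OF u] by blast
qed

text \<open>The Rayleigh quotient \<open>u\<^sup>* A u / u\<^sup>* u\<close> of a complex eigenvector \<open>u\<close> is real.\<close>

lemma sym_real_mat_complex_eigenvalue_real:
  fixes A :: "real mat"
  assumes A: "A \<in> carrier_mat n n" and sym: "transpose_mat A = A"
    and ev: "eigenvalue (map_mat complex_of_real A) z"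
  shows "Im z = 0"
proof -
  define Ac where "Ac = map_mat complex_of_real A"
  have Ac: "Ac \<in> carrier_mat n n" using A unfolding Ac_def by auto
  obtain u where u: "u \<in> carrier_vec n" "u \<noteq> 0\<^sub>v n" "Ac *\<^sub>v u = z \<cdot>\<^sub>v u"
    using ev Ac unfolding Ac_def[symmetric] eigenvalue_def eigenvector_def by auto
  define s where "s = (\<Sum>i<n. cnj (u $ i) * (Ac *\<^sub>v u) $ i)"
  define R where "R = (\<Sum>i<n. (Re (u $ i))\<^sup>2 + (Im (u $ i))\<^sup>2)"
  have "s = (\<Sum>i<n. z * (u $ i * cnj (u $ i)))" unfolding s_def using u
    by (intro sum.cong) (auto simp: ac_simps)
  hence s_z: "s = z * complex_of_real R" unfolding R_def complex_mult_cnj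
    by (simp add: sum_distrib_left)
  have s_A: "s = (\<Sum>i<n. \<Sum>j<n. cnj (u $ i) * complex_of_real (A $$ (i, j)) * u $ j)"
    unfolding s_def using u(1) A Ac
    by (intro sum.cong) (auto simp: Ac_def scalar_prod_def lessThan_atLeast0 sum_distrib_left ac_simps)
  have "cnj s = (\<Sum>i<n. \<Sum>j<n. u $ i * complex_of_real (A $$ (i, j)) * cnj (u $ j))"
    unfolding s_A by (simp add: cnj_sum)
  also have "\<dots> = (\<Sum>j<n. \<Sum>i<n. u $ i * complex_of_real (A $$ (i, j)) * cnj (u $ j))"
    by (rule sum.swap)
  also have "\<dots> = s" unfolding s_A
  proof (intro sum.cong refl)
    fix j i assume "j \<in> {..<n}" "i \<in> {..<n}"
    hence "A $$ (i, j) = A $$ (j, i)" using sym A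
      by (metis carrier_matD(1,2) index_transpose_mat(1) lessThan_iff)
    thus "u $ i * complex_of_real (A $$ (i, j)) * cnj (u $ j)
          = cnj (u $ j) * complex_of_real (A $$ (j, i)) * u $ i" by simp
  qed
  finally have "Im s = 0" by (metis cnj.sel(2) equal_neg_zero)
  moreover have "R > 0"
  proof -
    obtain i where i: "i < n" "u $ i \<noteq> 0" using u
      by (metis carrier_vecD eq_vecI index_zero_vec(1,2))
    have "(Re (u $ i))\<^sup>2 + (Im (u $ i))\<^sup>2 > 0" using i(2)
      by (auto simp: sum_power2_gt_zero_iff complex_eq_iff)
    also have "\<dots> \<le> R" unfolding R_def by (rule member_le_sum) (use i in auto)
    finally show ?thesis .
  qed
  ultimately show ?thesis using s_z by simp
qed

lemma sym_real_mat_has_eigenvalue: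
  fixes A :: "real mat"
  assumes A: "A \<in> carrier_mat n n" and sym: "transpose_mat A = A" and n: "0 < n"
  shows "\<exists>l. eigenvalue A l"
proof -
  define Ac where "Ac = map_mat complex_of_real A"
  have Ac: "Ac \<in> carrier_mat n n" using A unfolding Ac_def by auto
  obtain as where cp: "char_poly Ac = (\<Prod>a\<leftarrow>as. [:- a, 1:])" and len: "length as = n"
    using char_poly_factorized[OF Ac] by auto
  have "as ! 0 \<in> set as" using len n by auto
  hence root: "poly (char_poly Ac) (as ! 0) = 0" unfolding cp by (rule linear_poly_root)
  hence "Im (as ! 0) = 0"
    using sym_real_mat_complex_eigenvalue_real[OF A sym] eigenvalue_root_char_poly[OF Ac]
    unfolding Ac_def by auto
  hence "as ! 0 = complex_of_real (Re (as ! 0))" by (simp add: complex_eq_iff)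
  moreover have "char_poly Ac = map_poly complex_of_real (char_poly A)"
    unfolding Ac_def by (rule of_real_hom.char_poly_hom[OF A])
  ultimately have "complex_of_real (poly (char_poly A) (Re (as ! 0))) = 0"
    using root by (metis of_real_hom.poly_map_poly)
  hence "poly (char_poly A) (Re (as ! 0)) = 0" by simp
  thus ?thesis using eigenvalue_root_char_poly[OF A] by auto
qed

lemma unit_eigenvector:
  fixes A :: "real mat"
  assumes A: "A \<in> carrier_mat n n" and "eigenvalue A l"
  shows "\<exists>v \<in> carrier_vec n. v \<bullet> v = 1 \<and> A *\<^sub>v v = l \<cdot>\<^sub>v v"
proof -
  obtain w where w: "w \<in> carrier_vec n" "w \<noteq> 0\<^sub>v n" "A *\<^sub>v w = l \<cdot>\<^sub>v w"
    using assms unfolding eigenvalue_def eigenvector_def by auto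
  have "w \<bullet> w > 0"
  proof -
    obtain i where i: "i < n" "w $ i \<noteq> 0" using w
      by (metis carrier_vecD eq_vecI index_zero_vec(1,2))
    have "0 < w $ i * w $ i" using i by (auto simp: zero_less_mult_iff linorder_neq_iff)
    also have "\<dots> \<le> (\<Sum>k<n. w $ k * w $ k)" by (rule member_le_sum) (use i in auto)
    also have "\<dots> = w \<bullet> w" using w by (simp add: scalar_prod_def lessThan_atLeast0)
    finally show ?thesis .
  qed
  define v where "v = (1 / sqrt (w \<bullet> w)) \<cdot>\<^sub>v w"
  have "v \<bullet> v = (1 / sqrt (w \<bullet> w)) * (1 / sqrt (w \<bullet> w)) * (w \<bullet> w)"
    unfolding v_def using w by (simp add: smult_scalar_prod_distrib scalar_prod_smult_distrib)
  also have "\<dots> = 1" using \<open>w \<bullet> w > 0\<close> by (simp add: field_simps)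
  finally have "v \<bullet> v = 1" .
  moreover have "A *\<^sub>v v = l \<cdot>\<^sub>v v" unfolding v_def using w A
    by (simp add: mult_mat_vec smult_smult_assoc mult.commute)
  moreover have "v \<in> carrier_vec n" using w unfolding v_def by auto
  ultimately show ?thesis by blast
qed

lemma orthonormal_congruence_eigen_block:
  fixes A :: "real mat"
  assumes A: "A \<in> carrier_mat (Suc n) (Suc n)" and sym: "transpose_mat A = A"
    and W: "orthonormal_mat (Suc n) W" and W0: "col W 0 = v" and v: "A *\<^sub>v v = l \<cdot>\<^sub>v v"
  shows "\<exists>A'. A' \<in> carrier_mat n n \<and> transpose_mat A' = A'
           \<and> transpose_mat W * A * W = block_diag_cons l A'"
proof -
  have Wc: "W \<in> carrier_mat (Suc n) (Suc n)" and WW: "transpose_mat W * W = 1\<^sub>m (Suc n)"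
    using W unfolding orthonormal_mat_def by auto
  have vc: "v \<in> carrier_vec (Suc n)" using W0 Wc by (auto simp: col_def)
  define B where "B = transpose_mat W * A * W"
  have Bc: "B \<in> carrier_mat (Suc n) (Suc n)" unfolding B_def using Wc A by auto
  have B_sym: "B $$ (i, j) = B $$ (j, i)" if "i < Suc n" "j < Suc n" for i j
    using arg_cong[OF symmetric_congruence[OF A sym Wc], of "\<lambda>M. M $$ (i, j)"] that Wc
    unfolding B_def by simp
  have "col B 0 = transpose_mat W *\<^sub>v (A *\<^sub>v v)"
    unfolding B_def using Wc A vc W0 by (subst col_mult2) (auto simp: assoc_mult_mat_vec)
  also have "\<dots> = l \<cdot>\<^sub>v col (transpose_mat W * W) 0"
    using v vc Wc W0 by (subst col_mult2) (auto simp: mult_mat_vec)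
  finally have col_B: "col B 0 = l \<cdot>\<^sub>v unit_vec (Suc n) 0" unfolding WW by simp
  have col0: "B $$ (i, 0) = (if i = 0 then l else 0)" if "i < Suc n" for i
    using arg_cong[OF col_B, of "\<lambda>x. x $ i"] that Bc by auto
  define A' where "A' = mat n n (\<lambda>(i, j). B $$ (Suc i, Suc j))"
  have "B = block_diag_cons l A'"
  proof (rule eq_matI)
    fix i j assume "i < dim_row (block_diag_cons l A')" "j < dim_col (block_diag_cons l A')"
    hence i: "i < Suc n" and j: "j < Suc n" unfolding A'_def block_diag_cons_def by auto
    show "B $$ (i, j) = block_diag_cons l A' $$ (i, j)"
      using col0[OF i] col0[OF j] B_sym[OF i j] i j
      unfolding A'_def block_diag_cons_def by (cases i; cases j) auto
  qed (use Bc in \<open>auto simp: A'_def block_diag_cons_def\<close>)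
  moreover have "transpose_mat A' = A'"
    unfolding A'_def by (rule eq_matI) (auto intro: B_sym)
  ultimately show ?thesis unfolding B_def by (intro exI[of _ A']) (auto simp: A'_def)
qed

definition spectral_decomp :: "'a::comm_ring_1 mat \<Rightarrow> 'a mat \<Rightarrow> 'a list \<Rightarrow> bool" where
  "spectral_decomp A Q d \<longleftrightarrow> orthonormal_mat (length d) Q \<and> A = Q * diag_list d * transpose_mat Q"

lemma orthonormal_mat_mult:
  fixes W Q :: "'a::comm_ring_1 mat"
  assumes "orthonormal_mat n W" and "orthonormal_mat n Q"
  shows "orthonormal_mat n (W * Q)"
proof -
  have W: "W \<in> carrier_mat n n" "transpose_mat W * W = 1\<^sub>m n"
    and Q: "Q \<in> carrier_mat n n" "transpose_mat Q * Q = 1\<^sub>m n"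
    using assms unfolding orthonormal_mat_def by auto
  have "transpose_mat (W * Q) * (W * Q) = transpose_mat Q * (transpose_mat W * W) * Q"
    using W(1) Q(1) by (simp add: transpose_mult[OF W(1) Q(1)] assoc_mult_mat[of _ n n _ n _ n])
  thus ?thesis using W Q unfolding orthonormal_mat_def by simp
qed

lemma spectral_decomp_orthonormal_congruence:
  fixes A W :: "'a::field mat"
  assumes A: "A \<in> carrier_mat n n" and W: "orthonormal_mat n W"
    and d: "spectral_decomp (transpose_mat W * A * W) Q d" and len: "length d = n"
  shows "spectral_decomp A (W * Q) d"
proof -
  have Wc: "W \<in> carrier_mat n n" and WW': "W * transpose_mat W = 1\<^sub>m n"
    using W orthonormal_mat_right_inverse[OF W] unfolding orthonormal_mat_def by auto
  have Q: "orthonormal_mat n Q" and Qc: "Q \<in> carrier_mat n n"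
    and WAW: "transpose_mat W * A * W = Q * diag_list d * transpose_mat Q"
    using d len unfolding spectral_decomp_def orthonormal_mat_def by auto
  have D: "diag_list d \<in> carrier_mat n n" using diag_list_carrier[of d] len by simp
  have "A = (W * transpose_mat W) * A * (W * transpose_mat W)" using A by (simp add: WW')
  also have "\<dots> = W * (transpose_mat W * A * W) * transpose_mat W"
    using A Wc by (simp add: assoc_mult_mat[of _ n n _ n _ n])
  also have "\<dots> = (W * Q) * diag_list d * transpose_mat (W * Q)"
    unfolding WAW using Wc Qc D by (simp add: transpose_mult[OF Wc Qc] assoc_mult_mat[of _ n n _ n _ n])
  finally show ?thesis
    using orthonormal_mat_mult[OF W Q] len unfolding spectral_decomp_def by simp
qed

lemma spectral_decomp_block_diag_cons:
  fixes A Q :: "'a::comm_ring_1 mat"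
  assumes "spectral_decomp A Q d"
  shows "spectral_decomp (block_diag_cons l A) (block_diag_cons 1 Q) (l # d)"
proof -
  let ?n = "length d"
  have Q: "Q \<in> carrier_mat ?n ?n" "transpose_mat Q * Q = 1\<^sub>m ?n"
    and A: "A = Q * diag_list d * transpose_mat Q"
    using assms unfolding spectral_decomp_def orthonormal_mat_def by auto
  have "transpose_mat (block_diag_cons 1 Q) * block_diag_cons 1 Q = 1\<^sub>m (Suc ?n)"
    using block_diag_cons_mult[of "transpose_mat Q" ?n ?n Q ?n 1 1] Q
    unfolding transpose_block_diag_cons by (simp add: block_diag_cons_one)
  moreover have "block_diag_cons 1 Q * diag_list (l # d) * transpose_mat (block_diag_cons 1 Q)
      = block_diag_cons l A"
    using block_diag_cons_mult[of Q ?n ?n "diag_list d" ?n 1 l] Q diag_list_carrier[of d]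
      block_diag_cons_mult[of "Q * diag_list d" ?n ?n "transpose_mat Q" ?n l 1]
    unfolding transpose_block_diag_cons diag_list_Cons A by simp
  ultimately show ?thesis
    using block_diag_cons_carrier[OF Q(1)] unfolding spectral_decomp_def orthonormal_mat_def by simp
qed

theorem spectral_theorem:
  fixes A :: "real mat"
  assumes "A \<in> carrier_mat n n" and "transpose_mat A = A"
  shows "\<exists>Q d. length d = n \<and> spectral_decomp A Q d"
  using assms
proof (induction n arbitrary: A)
  case 0
  thus ?case by (intro exI[of _ "1\<^sub>m 0"] exI[of _ "[]"])
      (auto simp: spectral_decomp_def orthonormal_mat_def diag_list_def intro!: eq_matI)
next
  case (Suc n)
  note A = Suc.prems(1) and sym = Suc.prems(2)
  obtain l where "eigenvalue A l" using sym_real_mat_has_eigenvalue[OF A sym] by auto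
  then obtain v where v: "v \<in> carrier_vec (Suc n)" "v \<bullet> v = 1" "A *\<^sub>v v = l \<cdot>\<^sub>v v"
    using unit_eigenvector[OF A] by auto
  obtain W where W: "orthonormal_mat (Suc n) W" "col W 0 = v"
    using unit_vec_orthonormal_completion[OF v(1) _ v(2)] by auto
  obtain A' where A': "A' \<in> carrier_mat n n" "transpose_mat A' = A'"
    "transpose_mat W * A * W = block_diag_cons l A'"
    using orthonormal_congruence_eigen_block[OF A sym W v(3)] by auto
  obtain Q' d' where d': "length d' = n" "spectral_decomp A' Q' d'"
    using Suc.IH[OF A'(1,2)] by auto
  have "spectral_decomp (transpose_mat W * A * W) (block_diag_cons 1 Q') (l # d')"
    unfolding A'(3) by (rule spectral_decomp_block_diag_cons[OF d'(2)])
  hence "spectral_decomp A (W * block_diag_cons 1 Q') (l # d')"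
    by (rule spectral_decomp_orthonormal_congruence[OF A W(1)]) (simp add: d'(1))
  thus ?case using d'(1) by (intro exI[of _ "W * block_diag_cons 1 Q'"] exI[of _ "l # d'"]) simp
qed

section \<open>Signature and Sylvester's law of inertia\<close>

lemma count_list_filter: "P x \<Longrightarrow> count_list (filter P d) x = count_list d x"
  by (induct d) auto

lemma order_prod_linear_factors: "order x (\<Prod>a\<leftarrow>d. [:- a, 1:]) = count_list d x"
proof -
  have "order x (\<Prod>a\<leftarrow>d. [:- a, 1:]) = sum_list (map (order x) (map (\<lambda>a. [:- a, 1:]) d))"
    by (rule order_prod_list) auto
  also have "\<dots> = count_list d x"
    by (induct d) (auto simp: order_linear')
  finally show ?thesis .
qed

lemma sum_order_roots_prod_linear_factors:
  "(\<Sum>x\<in>{x. P x \<and> poly (\<Prod>a\<leftarrow>d. [:- a, 1:]) x = 0}. order x (\<Prod>a\<leftarrow>d. [:- a, 1:]))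
   = length (filter P d)"
proof -
  have roots: "{x. P x \<and> poly (\<Prod>a\<leftarrow>d. [:- a, 1:]) x = 0} = set (filter P d)"
    by (auto simp: poly_prod_list_zero_iff)
  have "(\<Sum>x\<in>set (filter P d). count_list d x) = (\<Sum>x\<in>set (filter P d). count_list (filter P d) x)"
    by (rule sum.cong) (auto simp: count_list_filter)
  also have "\<dots> = length (filter P d)" by (rule sum_count_set) auto
  finally show ?thesis unfolding roots order_prod_linear_factors .
qed

lemma mat_signature_char_poly_linear_factors:
  assumes "char_poly A = (\<Prod>a\<leftarrow>d. [:- a, 1:])"
  shows "mat_signature A = int (length (filter ((<) 0) d)) - int (length (filter (\<lambda>x. x < 0) d))"
  unfolding mat_signature_def assms sum_order_roots_prod_linear_factors by (simp add: comp_def)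

lemma char_poly_spectral_decomp:
  fixes A :: "real mat"
  assumes "spectral_decomp A Q d"
  shows "char_poly A = (\<Prod>a\<leftarrow>d. [:- a, 1:])"
proof -
  let ?n = "length d"
  have Q: "Q \<in> carrier_mat ?n ?n" "transpose_mat Q * Q = 1\<^sub>m ?n" "Q * transpose_mat Q = 1\<^sub>m ?n"
    and A: "A = Q * diag_list d * transpose_mat Q"
    using assms orthonormal_mat_right_inverse
    unfolding spectral_decomp_def orthonormal_mat_def by auto
  have "similar_mat A (diag_list d)" unfolding similar_mat_def similar_mat_wit_def A
    by (intro exI[of _ Q] exI[of _ "transpose_mat Q"]) (use Q diag_list_carrier[of d] in auto)
  hence "char_poly A = char_poly (diag_list d)" by (rule char_poly_similar)
  also have "\<dots> = (\<Prod>a\<leftarrow>d. [:- a, 1:])"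
    using char_poly_upper_triangular[OF diag_list_carrier[of d]] diag_mat_diag_list[of d]
    unfolding upper_triangular_def diag_list_def by auto
  finally show ?thesis .
qed

lemma char_poly_four_block_diag:
  fixes A B :: "'a::idom mat"
  assumes A: "A \<in> carrier_mat n n" and B: "B \<in> carrier_mat m m"
  shows "char_poly (four_block_mat A (0\<^sub>m n m) (0\<^sub>m m n) B) = char_poly A * char_poly B"
proof -
  have "char_poly_matrix (four_block_mat A (0\<^sub>m n m) (0\<^sub>m m n) B)
      = four_block_mat (char_poly_matrix A) (0\<^sub>m n m) (0\<^sub>m m n) (char_poly_matrix B)"
    using A B by (intro eq_matI) (auto simp: char_poly_matrix_def four_block_mat_def)
  thus ?thesis unfolding char_poly_def
    using det_four_block_mat_lower_left_zero[of "char_poly_matrix A" n "0\<^sub>m n m" m "0\<^sub>m m n"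
        "char_poly_matrix B"] A B
    by auto
qed

lemma mat_signature_four_block_diag:
  fixes A B :: "real mat"
  assumes A: "A \<in> carrier_mat n n" "transpose_mat A = A"
    and B: "B \<in> carrier_mat m m" "transpose_mat B = B"
  shows "mat_signature (four_block_mat A (0\<^sub>m n m) (0\<^sub>m m n) B) = mat_signature A + mat_signature B"
proof -
  obtain Q1 d1 where d1: "spectral_decomp A Q1 d1" using spectral_theorem[OF A] by auto
  obtain Q2 d2 where d2: "spectral_decomp B Q2 d2" using spectral_theorem[OF B] by auto
  have "char_poly (four_block_mat A (0\<^sub>m n m) (0\<^sub>m m n) B) = (\<Prod>a\<leftarrow>d1 @ d2. [:- a, 1:])"
    unfolding char_poly_four_block_diag[OF A(1) B(1)] char_poly_spectral_decomp[OF d1]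
      char_poly_spectral_decomp[OF d2] by simp
  from mat_signature_char_poly_linear_factors[OF this]
    mat_signature_char_poly_linear_factors[OF char_poly_spectral_decomp[OF d1]]
    mat_signature_char_poly_linear_factors[OF char_poly_spectral_decomp[OF d2]]
  show ?thesis by simp
qed

lemma quad_form_spectral_decomp:
  fixes A :: "real mat"
  assumes "spectral_decomp A Q d" and y: "y \<in> carrier_vec (length d)"
  shows "quad_form A (Q *\<^sub>v y) = (\<Sum>i<length d. d ! i * (y $ i)\<^sup>2)"
proof -
  let ?n = "length d"
  have Q: "Q \<in> carrier_mat ?n ?n" "transpose_mat Q * Q = 1\<^sub>m ?n"
    and A: "A = Q * diag_list d * transpose_mat Q"
    using assms unfolding spectral_decomp_def orthonormal_mat_def by auto
  have D: "diag_list d \<in> carrier_mat ?n ?n" by (rule diag_list_carrier)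
  have "transpose_mat Q * A * Q = (transpose_mat Q * Q) * diag_list d * (transpose_mat Q * Q)"
    unfolding A using Q(1) D by (simp add: assoc_mult_mat[of _ ?n ?n _ ?n _ ?n])
  hence "transpose_mat Q * A * Q = diag_list d" using Q D by simp
  moreover have "A \<in> carrier_mat ?n ?n" unfolding A using Q D by simp
  ultimately show ?thesis
    using quad_form_congruence[of A ?n Q ?n y] Q y by (simp add: quad_form_diag_list)
qed

lemma selection_mat_exists:
  assumes "distinct idx" and "set idx \<subseteq> {..<n}"
  shows "\<exists>S \<in> carrier_mat n (length idx). \<forall>a \<in> carrier_vec (length idx).
           (\<forall>j < length idx. (S *\<^sub>v a) $ (idx ! j) = a $ j) \<and>
           (\<forall>i < n. i \<notin> set idx \<longrightarrow> (S *\<^sub>v a) $ i = (0::'a::comm_ring_1)) \<and>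
           (S *\<^sub>v a = 0\<^sub>v n \<longrightarrow> a = 0\<^sub>v (length idx))"
proof -
  let ?k = "length idx"
  define S where "S = mat n ?k (\<lambda>(i, j). if i = idx ! j then 1 else (0::'a))"
  have idx_n: "idx ! j < n" if "j < ?k" for j using assms(2) nth_mem[OF that] by auto
  have entry: "(S *\<^sub>v a) $ i = (\<Sum>l<?k. if i = idx ! l then a $ l else 0)"
    if "a \<in> carrier_vec ?k" "i < n" for a i
    using that unfolding S_def by (auto simp: scalar_prod_def lessThan_atLeast0 intro!: sum.cong)
  have S_idx: "(S *\<^sub>v a) $ (idx ! j) = a $ j" if "a \<in> carrier_vec ?k" "j < ?k" for a j
  proof -
    have "(\<Sum>l<?k. if idx ! j = idx ! l then a $ l else 0) = (\<Sum>l<?k. if l = j then a $ l else 0)"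
      by (rule sum.cong) (use assms(1) that in \<open>auto simp: nth_eq_iff_index_eq\<close>)
    thus ?thesis using entry[OF that(1) idx_n[OF that(2)]] that(2) by simp
  qed
  moreover have "(S *\<^sub>v a) $ i = 0" if "a \<in> carrier_vec ?k" "i < n" "i \<notin> set idx" for a i
    using entry[OF that(1,2)] that(3) by (auto intro!: sum.neutral)
  moreover have "a = 0\<^sub>v ?k" if "a \<in> carrier_vec ?k" "S *\<^sub>v a = 0\<^sub>v n" for a
    using S_idx[OF that(1)] idx_n that by (intro eq_vecI) force+
  moreover have "S \<in> carrier_mat n ?k" unfolding S_def by simp
  ultimately show ?thesis by blast
qed

lemma filter_conv_map_nth: "filter P xs = map (nth xs) (filter (\<lambda>i. P (xs ! i)) [0..<length xs])"
proof -
  have "filter P xs = filter P (map (nth xs) [0..<length xs])" by (simp add: map_nth)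
  thus ?thesis by (simp add: filter_map comp_def)
qed

text \<open>The span of the eigenvectors whose eigenvalues satisfy \<open>\<phi>\<close>.\<close>

lemma spectral_subspace:
  fixes A :: "real mat" and \<phi> :: "real \<Rightarrow> bool"
  assumes decomp: "spectral_decomp A Q d"
  defines "k \<equiv> length (filter \<phi> d)"
  shows "\<exists>U \<in> carrier_mat (length d) k. \<forall>a \<in> carrier_vec k.
           quad_form A (U *\<^sub>v a) = (\<Sum>j<k. filter \<phi> d ! j * (a $ j)\<^sup>2) \<and>
           (U *\<^sub>v a = 0\<^sub>v (length d) \<longrightarrow> a = 0\<^sub>v k)"
proof -
  let ?n = "length d"
  define idx where "idx = filter (\<lambda>i. \<phi> (d ! i)) [0..<?n]"
  have filter_idx: "filter \<phi> d = map (nth d) idx" unfolding idx_def by (rule filter_conv_map_nth)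
  hence k: "length idx = k" unfolding k_def by simp
  have idx: "distinct idx" "set idx \<subseteq> {..<?n}" unfolding idx_def by auto
  obtain S :: "real mat" where S: "S \<in> carrier_mat ?n k"
    and S_idx: "\<And>a j. a \<in> carrier_vec k \<Longrightarrow> j < k \<Longrightarrow> (S *\<^sub>v a) $ (idx ! j) = a $ j"
    and S_0: "\<And>a i. a \<in> carrier_vec k \<Longrightarrow> i < ?n \<Longrightarrow> i \<notin> set idx \<Longrightarrow> (S *\<^sub>v a) $ i = 0"
    and S_inj: "\<And>a. a \<in> carrier_vec k \<Longrightarrow> S *\<^sub>v a = 0\<^sub>v ?n \<Longrightarrow> a = 0\<^sub>v k"
    using selection_mat_exists[OF idx] unfolding k by blast
  have Q: "Q \<in> carrier_mat ?n ?n" using decomp unfolding spectral_decomp_def orthonormal_mat_def by auto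
  have "quad_form A ((Q * S) *\<^sub>v a) = (\<Sum>j<k. filter \<phi> d ! j * (a $ j)\<^sup>2) \<and>
        ((Q * S) *\<^sub>v a = 0\<^sub>v ?n \<longrightarrow> a = 0\<^sub>v k)" if a: "a \<in> carrier_vec k" for a
  proof
    define y where "y = S *\<^sub>v a"
    have y: "y \<in> carrier_vec ?n" and QSa: "(Q * S) *\<^sub>v a = Q *\<^sub>v y"
      unfolding y_def using Q S a by (auto simp: assoc_mult_mat_vec)
    have "quad_form A ((Q * S) *\<^sub>v a) = (\<Sum>i<?n. d ! i * (y $ i)\<^sup>2)"
      unfolding QSa by (rule quad_form_spectral_decomp[OF decomp y])
    also have "\<dots> = (\<Sum>i\<in>set idx. d ! i * (y $ i)\<^sup>2)"
      by (rule sum.mono_neutral_right) (use idx S_0[OF a] in \<open>auto simp: y_def\<close>)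
    also have "\<dots> = (\<Sum>j<k. d ! (idx ! j) * (y $ (idx ! j))\<^sup>2)"
      using idx(1) k by (simp add: sum.distinct_set_conv_list sum_list_sum_nth lessThan_atLeast0)
    also have "\<dots> = (\<Sum>j<k. filter \<phi> d ! j * (a $ j)\<^sup>2)"
      using S_idx[OF a] k unfolding filter_idx y_def by simp
    finally show "quad_form A ((Q * S) *\<^sub>v a) = (\<Sum>j<k. filter \<phi> d ! j * (a $ j)\<^sup>2)" .
    show "(Q * S) *\<^sub>v a = 0\<^sub>v ?n \<longrightarrow> a = 0\<^sub>v k"
      using orthonormal_mat_mult_vec_eq_0[OF _ y] decomp S_inj[OF a]
      unfolding QSa spectral_decomp_def y_def by blast
  qed
  thus ?thesis using Q S by (intro bexI[of _ "Q * S"]) auto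
qed

lemma positive_spectral_subspace:
  fixes A :: "real mat"
  assumes "spectral_decomp A Q d"
  defines "k \<equiv> length (filter ((<) 0) d)"
  shows "\<exists>U \<in> carrier_mat (length d) k.
           \<forall>a \<in> carrier_vec k. a \<noteq> 0\<^sub>v k \<longrightarrow> 0 < quad_form A (U *\<^sub>v a)"
proof -
  let ?e = "filter ((<) 0) d"
  obtain U where U: "U \<in> carrier_mat (length d) k"
    and U_form: "\<And>a. a \<in> carrier_vec k \<Longrightarrow> quad_form A (U *\<^sub>v a) = (\<Sum>j<k. ?e ! j * (a $ j)\<^sup>2)"
    using spectral_subspace[OF assms(1), of "(<) 0"] unfolding k_def by blast
  have "0 < (\<Sum>j<k. ?e ! j * (a $ j)\<^sup>2)" if a: "a \<in> carrier_vec k" "a \<noteq> 0\<^sub>v k" for a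
  proof -
    obtain i where i: "i < k" "a $ i \<noteq> 0"
      using a by (metis carrier_vecD eq_vecI index_zero_vec(1,2))
    have e_pos: "0 < ?e ! j" if "j < k" for j
      using nth_mem[of j ?e] that unfolding k_def by simp
    show ?thesis
    proof (rule sum_pos2[of "{..<k}" i])
      show "0 < ?e ! i * (a $ i)\<^sup>2" using e_pos[OF i(1)] i(2) by simp
      fix j assume "j \<in> {..<k}"
      thus "0 \<le> ?e ! j * (a $ j)\<^sup>2" using e_pos[of j] by simp
    qed (use i in auto)
  qed
  thus ?thesis using U_form by (intro bexI[OF _ U] ballI impI) auto
qed

lemma nonpositive_spectral_subspace:
  fixes A :: "real mat"
  assumes "spectral_decomp A Q d"
  defines "k \<equiv> length (filter (\<lambda>x. \<not> 0 < x) d)"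
  shows "\<exists>W \<in> carrier_mat (length d) k. \<forall>b \<in> carrier_vec k.
           quad_form A (W *\<^sub>v b) \<le> 0 \<and> (W *\<^sub>v b = 0\<^sub>v (length d) \<longrightarrow> b = 0\<^sub>v k)"
proof -
  let ?e = "filter (\<lambda>x. \<not> 0 < x) d"
  obtain W where W: "W \<in> carrier_mat (length d) k"
    and W_prop: "\<And>b. b \<in> carrier_vec k \<Longrightarrow> quad_form A (W *\<^sub>v b) = (\<Sum>j<k. ?e ! j * (b $ j)\<^sup>2)
      \<and> (W *\<^sub>v b = 0\<^sub>v (length d) \<longrightarrow> b = 0\<^sub>v k)"
    using spectral_subspace[OF assms(1), of "\<lambda>x. \<not> 0 < x"] unfolding k_def by blast
  have nonpos: "(\<Sum>j<k. ?e ! j * (b $ j)\<^sup>2) \<le> 0" for b :: "real vec"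
  proof (rule sum_nonpos)
    fix j assume "j \<in> {..<k}"
    hence "?e ! j \<le> 0" using nth_mem[of j ?e] unfolding k_def by auto
    thus "?e ! j * (b $ j)\<^sup>2 \<le> 0" by (simp add: mult_nonpos_nonneg)
  qed
  show ?thesis
  proof (intro bexI[OF _ W] ballI conjI)
    fix b :: "real vec" assume b: "b \<in> carrier_vec k"
    show "quad_form A (W *\<^sub>v b) \<le> 0" using W_prop[OF b] nonpos[of b] by simp
    show "W *\<^sub>v b = 0\<^sub>v (length d) \<longrightarrow> b = 0\<^sub>v k" using W_prop[OF b] by simp
  qed
qed

text \<open>Sylvester's law of inertia, in the two inequalities it gives for an injective congruence.\<close>

lemma positive_index_congruence_le:
  fixes N P :: "real mat"
  assumes N: "N \<in> carrier_mat n n" and P: "P \<in> carrier_mat n m"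
    and d: "spectral_decomp N Q d" "length d = n"
    and d': "spectral_decomp (transpose_mat P * N * P) Q' d'" "length d' = m"
  shows "length (filter ((<) 0) d') \<le> length (filter ((<) 0) d)"
proof -
  let ?p = "length (filter ((<) 0) d)" and ?p' = "length (filter ((<) 0) d')"
  let ?q = "length (filter (\<lambda>x. \<not> 0 < x) d)"
  obtain U where U: "U \<in> carrier_mat m ?p'" and U_pos: "\<And>a. a \<in> carrier_vec ?p' \<Longrightarrow>
      a \<noteq> 0\<^sub>v ?p' \<Longrightarrow> 0 < quad_form (transpose_mat P * N * P) (U *\<^sub>v a)"
    using positive_spectral_subspace[OF d'(1)] d'(2) by blast
  obtain W where W: "W \<in> carrier_mat n ?q" and W_prop: "\<And>b. b \<in> carrier_vec ?q \<Longrightarrow>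
      quad_form N (W *\<^sub>v b) \<le> 0 \<and> (W *\<^sub>v b = 0\<^sub>v n \<longrightarrow> b = 0\<^sub>v ?q)"
    using nonpositive_spectral_subspace[OF d(1)] d(2) by blast
  have "?p' + ?q \<le> n"
  proof (rule pos_nonpos_dim_bound[OF N mult_carrier_mat[OF P U] W])
    fix a :: "real vec" assume a: "a \<in> carrier_vec ?p'" "a \<noteq> 0\<^sub>v ?p'"
    have "(P * U) *\<^sub>v a = P *\<^sub>v (U *\<^sub>v a)" using P U a by (simp add: assoc_mult_mat_vec)
    thus "0 < quad_form N ((P * U) *\<^sub>v a)"
      using U_pos[OF a] quad_form_congruence[OF N P, of "U *\<^sub>v a"] U a by simp
  qed (use W_prop in auto)
  thus ?thesis using sum_length_filter_compl[of "(<) 0" d] d(2) by simp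
qed

lemma positive_index_congruence_ge:
  fixes N P :: "real mat"
  assumes N: "N \<in> carrier_mat n n" and P: "P \<in> carrier_mat n m"
    and P_inj: "\<And>v. v \<in> carrier_vec m \<Longrightarrow> P *\<^sub>v v = 0\<^sub>v n \<Longrightarrow> v = 0\<^sub>v m"
    and d: "spectral_decomp N Q d" "length d = n"
    and d': "spectral_decomp (transpose_mat P * N * P) Q' d'" "length d' = m"
  shows "length (filter ((<) 0) d) + m \<le> length (filter ((<) 0) d') + n"
proof -
  let ?p = "length (filter ((<) 0) d)" and ?p' = "length (filter ((<) 0) d')"
  let ?q' = "length (filter (\<lambda>x. \<not> 0 < x) d')"
  obtain U where U: "U \<in> carrier_mat n ?p"
    and U_pos: "\<And>a. a \<in> carrier_vec ?p \<Longrightarrow> a \<noteq> 0\<^sub>v ?p \<Longrightarrow> 0 < quad_form N (U *\<^sub>v a)"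
    using positive_spectral_subspace[OF d(1)] d(2) by blast
  obtain W where W: "W \<in> carrier_mat m ?q'" and W_prop: "\<And>b. b \<in> carrier_vec ?q' \<Longrightarrow>
      quad_form (transpose_mat P * N * P) (W *\<^sub>v b) \<le> 0 \<and> (W *\<^sub>v b = 0\<^sub>v m \<longrightarrow> b = 0\<^sub>v ?q')"
    using nonpositive_spectral_subspace[OF d'(1)] d'(2) by blast
  have "?p + ?q' \<le> n"
  proof (rule pos_nonpos_dim_bound[OF N U mult_carrier_mat[OF P W]])
    fix b :: "real vec" assume b: "b \<in> carrier_vec ?q'"
    have PW: "(P * W) *\<^sub>v b = P *\<^sub>v (W *\<^sub>v b)" using P W b by (simp add: assoc_mult_mat_vec)
    show "quad_form N ((P * W) *\<^sub>v b) \<le> 0"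
      using W_prop[OF b] quad_form_congruence[OF N P, of "W *\<^sub>v b"] W b unfolding PW by simp
    assume "(P * W) *\<^sub>v b = 0\<^sub>v n"
    hence "W *\<^sub>v b = 0\<^sub>v m" using P_inj[of "W *\<^sub>v b"] W b unfolding PW by simp
    thus "b = 0\<^sub>v ?q'" using W_prop[OF b] by simp
  qed (use U_pos in auto)
  thus ?thesis using sum_length_filter_compl[of "(<) 0" d'] d'(2) by simp
qed

lemma spectral_decomp_uminus:
  fixes A :: "'a::comm_ring_1 mat"
  assumes "spectral_decomp A Q d"
  shows "spectral_decomp (- A) Q (map uminus d)"
  using assms diag_list_carrier[of d]
  unfolding spectral_decomp_def diag_list_map_uminus orthonormal_mat_def by auto

theorem mat_signature_congruence_bound:
  fixes N P :: "real mat"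
  assumes N: "N \<in> carrier_mat n n" and sym: "transpose_mat N = N" and P: "P \<in> carrier_mat n m"
    and P_inj: "\<And>v. v \<in> carrier_vec m \<Longrightarrow> P *\<^sub>v v = 0\<^sub>v n \<Longrightarrow> v = 0\<^sub>v m"
  shows "\<bar>mat_signature (transpose_mat P * N * P) - mat_signature N\<bar> \<le> int n - int m"
proof -
  let ?M = "transpose_mat P * N * P"
  obtain Q d where d: "length d = n" "spectral_decomp N Q d"
    using spectral_theorem[OF N sym] by auto
  obtain Q' d' where d': "length d' = m" "spectral_decomp ?M Q' d'"
    using spectral_theorem[of ?M m] symmetric_congruence[OF N sym P] N P by auto
  \<comment> \<open>the negative index of \<open>N\<close> is the positive index of \<open>- N\<close>\<close>
  have "transpose_mat P * (- N) * P = - ?M" using N P by auto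
  hence "spectral_decomp (transpose_mat P * (- N) * P) Q' (map uminus d')"
    using spectral_decomp_uminus[OF d'(2)] by simp
  note neg = positive_index_congruence_le[OF uminus_carrier_mat[OF N] P
      spectral_decomp_uminus[OF d(2)] _ this]
    positive_index_congruence_ge[OF uminus_carrier_mat[OF N] P P_inj
      spectral_decomp_uminus[OF d(2)] _ this]
  note pos = positive_index_congruence_le[OF N P d(2,1) d'(2,1)]
    positive_index_congruence_ge[OF N P P_inj d(2,1) d'(2,1)]
  have "filter ((<) 0) (map uminus e) = map uminus (filter (\<lambda>x. x < 0) e)" for e :: "real list"
    by (simp add: filter_map comp_def)
  hence "length (filter (\<lambda>x. x < 0) d') \<le> length (filter (\<lambda>x. x < 0) d)"
    "length (filter (\<lambda>x. x < 0) d) + m \<le> length (filter (\<lambda>x. x < 0) d') + n"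
    using neg d(1) d'(1) by simp_all
  with pos show ?thesis
    unfolding mat_signature_char_poly_linear_factors[OF char_poly_spectral_decomp[OF d(2)]]
      mat_signature_char_poly_linear_factors[OF char_poly_spectral_decomp[OF d'(2)]]
    by linarith
qed

section \<open>Loops of a braid word\<close>

definition is_braid_loop :: "int list \<Rightarrow> nat \<Rightarrow> nat \<Rightarrow> bool" where
  "is_braid_loop w p q \<longleftrightarrow> p < q \<and> q < length w \<and> \<bar>w ! q\<bar> = \<bar>w ! p\<bar> \<and>
      (\<forall>r. p < r \<and> r < q \<longrightarrow> \<bar>w ! r\<bar> \<noteq> \<bar>w ! p\<bar>)"

lemma set_braid_loops: "set (braid_loops w) = {(p, q). is_braid_loop w p q}"
  unfolding braid_loops_def is_braid_loop_def by auto

lemma is_braid_loop_unique_right: "is_braid_loop w p q \<Longrightarrow> is_braid_loop w p q' \<Longrightarrow> q = q'"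
  unfolding is_braid_loop_def by (cases q q' rule: linorder_cases) auto

lemma is_braid_loop_unique_left: "is_braid_loop w p q \<Longrightarrow> is_braid_loop w p' q \<Longrightarrow> p = p'"
  unfolding is_braid_loop_def by (cases p p' rule: linorder_cases) auto

lemma braid_loop_bounds:
  "(p, q) \<in> set (braid_loops w) \<Longrightarrow> p < q \<and> q < length w \<and> \<bar>w ! q\<bar> = \<bar>w ! p\<bar>"
  unfolding set_braid_loops is_braid_loop_def by auto

lemma distinct_concat_map_key:
  assumes "distinct xs" and "\<And>x. x \<in> set xs \<Longrightarrow> distinct (f x) \<and> (\<forall>y \<in> set (f x). g y = x)"
  shows "distinct (concat (map f xs))"
  using assms by (induct xs) (auto, metis)

lemma distinct_braid_loops: "distinct (braid_loops w)"
  unfolding braid_loops_def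
  by (rule distinct_concat_map_key[where g = fst]) (auto intro!: distinct_concat_map_key[where g = snd])

lemma distinct_map_fst_braid_loops: "distinct (map fst (braid_loops w))"
proof -
  have "inj_on fst (set (braid_loops w))"
    unfolding set_braid_loops inj_on_def using is_braid_loop_unique_right by auto
  thus ?thesis using distinct_braid_loops[of w] by (simp add: distinct_map)
qed

lemma exists_braid_loop_from:
  assumes "p < q" "q < length w" "\<bar>w ! q\<bar> = \<bar>w ! p\<bar>"
  shows "\<exists>p'. is_braid_loop w p p' \<and> p' \<le> q"
proof -
  define p' where "p' = (LEAST r. p < r \<and> \<bar>w ! r\<bar> = \<bar>w ! p\<bar>)"
  have "p < p' \<and> \<bar>w ! p'\<bar> = \<bar>w ! p\<bar>" unfolding p'_def by (rule LeastI[of _ q]) (use assms in auto)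
  moreover have "p' \<le> q" unfolding p'_def by (rule Least_le) (use assms in auto)
  moreover have "\<forall>r. p < r \<and> r < p' \<longrightarrow> \<bar>w ! r\<bar> \<noteq> \<bar>w ! p\<bar>"
    using not_less_Least unfolding p'_def by blast
  ultimately show ?thesis using assms unfolding is_braid_loop_def by (intro exI[of _ p']) auto
qed

definition last_occurrences :: "int list \<Rightarrow> nat set" where
  "last_occurrences w = {p. p < length w \<and> (\<forall>r. p < r \<and> r < length w \<longrightarrow> \<bar>w ! r\<bar> \<noteq> \<bar>w ! p\<bar>)}"

lemma last_occurrences_subset: "last_occurrences w \<subseteq> {..<length w}"
  unfolding last_occurrences_def by auto

lemma fst_set_braid_loops: "fst ` set (braid_loops w) = {..<length w} - last_occurrences w"
proof
  show "fst ` set (braid_loops w) \<subseteq> {..<length w} - last_occurrences w"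
    unfolding set_braid_loops last_occurrences_def is_braid_loop_def by auto
  show "{..<length w} - last_occurrences w \<subseteq> fst ` set (braid_loops w)"
  proof
    fix p assume "p \<in> {..<length w} - last_occurrences w"
    then obtain r where "p < r" "r < length w" "\<bar>w ! r\<bar> = \<bar>w ! p\<bar>"
      unfolding last_occurrences_def by auto
    then obtain p' where "is_braid_loop w p p'" using exists_braid_loop_from by blast
    thus "p \<in> fst ` set (braid_loops w)" unfolding set_braid_loops by force
  qed
qed

lemma card_last_occurrences: "card (last_occurrences w) = card (abs ` set w)"
proof (rule bij_betw_same_card[of "\<lambda>p. \<bar>w ! p\<bar>"], rule bij_betwI')
  fix p p' assume "p \<in> last_occurrences w" "p' \<in> last_occurrences w"
  thus "(\<bar>w ! p\<bar> = \<bar>w ! p'\<bar>) = (p = p')"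
    unfolding last_occurrences_def by (cases p p' rule: linorder_cases) auto
next
  fix p assume "p \<in> last_occurrences w"
  thus "\<bar>w ! p\<bar> \<in> abs ` set w" unfolding last_occurrences_def by auto
next
  fix v assume "v \<in> abs ` set w"
  then obtain i where i: "i < length w" "v = \<bar>w ! i\<bar>" by (auto simp: in_set_conv_nth)
  define S where "S = {j. j < length w \<and> \<bar>w ! j\<bar> = v}"
  have S: "finite S" "i \<in> S" using i unfolding S_def by auto
  have max: "Max S \<in> S" using Max_in[OF S(1)] S(2) by auto
  hence "Max S \<in> last_occurrences w"
    using Max_ge[OF S(1)] unfolding last_occurrences_def S_def by fastforce
  moreover have "v = \<bar>w ! Max S\<bar>" using max unfolding S_def by auto
  ultimately show "\<exists>p \<in> last_occurrences w. v = \<bar>w ! p\<bar>" by blast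
qed

lemma length_braid_loops: "length (braid_loops w) + card (abs ` set w) = length w"
proof -
  have "length (braid_loops w) = card (fst ` set (braid_loops w))"
    using distinct_card[OF distinct_map_fst_braid_loops[of w]] by simp
  also have "\<dots> = length w - card (last_occurrences w)"
    unfolding fst_set_braid_loops using last_occurrences_subset[of w]
    by (simp add: card_Diff_subset finite_subset)
  finally show ?thesis
    using card_last_occurrences[of w] card_mono[OF _ last_occurrences_subset[of w]] by simp
qed

text \<open>The symmetrised Seifert form is the restriction of this form on the bands (letters) to the
  loops, the loop \<open>(p, q)\<close> being the difference \<open>e\<^sub>p - e\<^sub>q\<close> of its two bands.\<close>

definition band_form :: "int list \<Rightarrow> nat \<Rightarrow> nat \<Rightarrow> int" where
  "band_form w a b = (if a = b then - sgn (w ! a) else 0)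
     + (if a < b \<and> \<bar>w ! b\<bar> = \<bar>w ! a\<bar> + 1 then 1 else 0)
     + (if b < a \<and> \<bar>w ! a\<bar> = \<bar>w ! b\<bar> + 1 then 1 else 0)"

lemma band_form_sym: "band_form w a b = band_form w b a"
  unfolding band_form_def by auto

definition loop_form :: "int list \<Rightarrow> nat \<times> nat \<Rightarrow> nat \<times> nat \<Rightarrow> int" where
  "loop_form w l1 l2 = band_form w (fst l1) (fst l2) - band_form w (fst l1) (snd l2)
     - band_form w (snd l1) (fst l2) + band_form w (snd l1) (snd l2)"

lemma loop_form_sym: "loop_form w l1 l2 = loop_form w l2 l1"
  unfolding loop_form_def by (simp add: band_form_sym)

lemma seifert_sym_entry_loop_form:
  assumes l1: "l1 \<in> set (braid_loops w)" and l2: "l2 \<in> set (braid_loops w)"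
  shows "seifert_sym_entry w l1 l2 = loop_form w l1 l2"
proof -
  obtain p q r s where pq: "l1 = (p, q)" "is_braid_loop w p q" and rs: "l2 = (r, s)" "is_braid_loop w r s"
    using l1 l2 unfolding set_braid_loops by auto
  have loops: "p < q" "\<bar>w ! q\<bar> = \<bar>w ! p\<bar>" "r < s" "\<bar>w ! s\<bar> = \<bar>w ! r\<bar>"
    using pq(2) rs(2) unfolding is_braid_loop_def by auto
  have "seifert_sym_entry w (p, q) (r, s)
      = band_form w p r - band_form w p s - band_form w q r + band_form w q s"
  proof (cases "(p, q) = (r, s)")
    case False
    have "p \<noteq> r" "q \<noteq> s"
      using False rs(2) is_braid_loop_unique_right[OF pq(2)] is_braid_loop_unique_left[OF pq(2)] by auto
    with False loops show ?thesis
      unfolding seifert_sym_entry_def band_form_def Let_def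
      by (cases "q = r"; cases "s = p") auto
  qed (use loops in \<open>auto simp: seifert_sym_entry_def band_form_def\<close>)
  thus ?thesis unfolding pq(1) rs(1) loop_form_def by simp
qed

definition band_form_mat :: "int list \<Rightarrow> real mat" where
  "band_form_mat w = mat (length w) (length w) (\<lambda>(a, b). real_of_int (band_form w a b))"

lemma band_form_mat_carrier: "band_form_mat w \<in> carrier_mat (length w) (length w)"
  unfolding band_form_mat_def by simp

lemma band_form_mat_sym: "transpose_mat (band_form_mat w) = band_form_mat w"
  unfolding band_form_mat_def by (rule eq_matI) (auto simp: band_form_sym)

definition loop_vec :: "nat \<Rightarrow> nat \<times> nat \<Rightarrow> real vec" where
  "loop_vec n pq = unit_vec n (fst pq) - unit_vec n (snd pq)"

definition loop_mat :: "nat \<Rightarrow> (nat \<times> nat) list \<Rightarrow> real mat" where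
  "loop_mat n ps = mat_of_cols n (map (loop_vec n) ps)"

lemma loop_vec_carrier: "loop_vec n pq \<in> carrier_vec n"
  unfolding loop_vec_def by simp

lemma loop_mat_carrier: "loop_mat n ps \<in> carrier_mat n (length ps)"
  unfolding loop_mat_def by auto

lemma col_loop_mat: "j < length ps \<Longrightarrow> col (loop_mat n ps) j = loop_vec n (ps ! j)"
  unfolding loop_mat_def using loop_vec_carrier by (subst col_mat_of_cols) auto

lemma loop_vec_bilinear:
  assumes G: "G \<in> carrier_mat n n" and "p < n" "q < n" "r < n" "s < n"
  shows "loop_vec n (p, q) \<bullet> (G *\<^sub>v loop_vec n (r, s))
           = G $$ (p, r) - G $$ (p, s) - G $$ (q, r) + G $$ (q, s)"
proof -
  have G_unit: "(G *\<^sub>v unit_vec n t) $ u = G $$ (u, t)" if "t < n" "u < n" for t u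
    using G that by (simp add: scalar_prod_right_unit)
  have "G *\<^sub>v loop_vec n (r, s) = G *\<^sub>v unit_vec n r - G *\<^sub>v unit_vec n s"
    unfolding loop_vec_def fst_conv snd_conv by (rule mult_minus_distrib_mat_vec[OF G]) auto
  hence "loop_vec n (p, q) \<bullet> (G *\<^sub>v loop_vec n (r, s))
      = (G *\<^sub>v unit_vec n r - G *\<^sub>v unit_vec n s) $ p - (G *\<^sub>v unit_vec n r - G *\<^sub>v unit_vec n s) $ q"
    unfolding loop_vec_def using G assms
    by (simp add: minus_scalar_prod_distrib[of _ n] scalar_prod_left_unit)
  thus ?thesis using G assms by (simp add: G_unit)
qed

lemma congruence_band_form_mat_entry:
  assumes i: "i < length ps" and j: "j < length ps"
    and ps: "set ps \<subseteq> {..<length w} \<times> {..<length w}"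
  shows "(transpose_mat (loop_mat (length w) ps) * band_form_mat w * loop_mat (length w) ps) $$ (i, j)
           = real_of_int (loop_form w (ps ! i) (ps ! j))"
proof -
  obtain p q r s where pq: "ps ! i = (p, q)" and rs: "ps ! j = (r, s)" by fastforce
  have "(p, q) \<in> set ps" "(r, s) \<in> set ps" using nth_mem[OF i] nth_mem[OF j] pq rs by auto
  hence bounds: "p < length w" "q < length w" "r < length w" "s < length w" using ps by auto
  have "loop_vec (length w) (p, q) \<bullet> (band_form_mat w *\<^sub>v loop_vec (length w) (r, s))
      = real_of_int (loop_form w (p, q) (r, s))"
    using loop_vec_bilinear[OF band_form_mat_carrier bounds] bounds
    by (simp add: band_form_mat_def loop_form_def)
  thus ?thesis
    unfolding congruence_entry[OF loop_mat_carrier band_form_mat_carrier i j]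
      col_loop_mat[OF i] col_loop_mat[OF j] pq rs .
qed

text \<open>The coordinate of \<open>L v\<close> at the first band \<open>t\<close> of a loop is its coefficient minus those
  of the loops ending at \<open>t\<close>; these start before \<open>t\<close>, so induction on \<open>t\<close> applies.\<close>

lemma loop_mat_inj:
  assumes ps: "\<And>p q. (p, q) \<in> set ps \<Longrightarrow> p < q \<and> q < n" and dist: "distinct (map fst ps)"
    and v: "v \<in> carrier_vec (length ps)" and zero: "loop_mat n ps *\<^sub>v v = 0\<^sub>v n"
  shows "v = 0\<^sub>v (length ps)"
proof -
  have coord: "(loop_mat n ps *\<^sub>v v) $ t = (\<Sum>j<length ps. v $ j *
      ((if t = fst (ps ! j) then 1 else 0) - (if t = snd (ps ! j) then 1 else 0)))" if "t < n" for t
    using v that unfolding loop_mat_def mat_of_cols_def loop_vec_def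
    by (auto simp: unit_vec_def scalar_prod_def lessThan_atLeast0 intro!: sum.cong)
  have "\<forall>j < length ps. fst (ps ! j) = t \<longrightarrow> v $ j = 0" for t
  proof (induction t rule: less_induct)
    case (less t)
    show ?case
    proof (intro allI impI)
      fix j0 assume j0: "j0 < length ps" "fst (ps ! j0) = t"
      have t: "t < n" using ps[of "fst (ps ! j0)" "snd (ps ! j0)"] j0 nth_mem[OF j0(1)] by auto
      have "0 = (loop_mat n ps *\<^sub>v v) $ t" using zero t by simp
      also have "\<dots> = (\<Sum>j<length ps. if j = j0 then v $ j else 0)"
        unfolding coord[OF t]
      proof (rule sum.cong[OF refl])
        fix j assume j: "j \<in> {..<length ps}"
        have lt: "fst (ps ! j) < snd (ps ! j)" using ps[of "fst (ps ! j)" "snd (ps ! j)"] j by auto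
        have "j \<noteq> j0 \<Longrightarrow> t \<noteq> fst (ps ! j)"
          using dist j j0 by (auto simp: nth_eq_iff_index_eq[symmetric])
        moreover have "t = snd (ps ! j) \<Longrightarrow> v $ j = 0" using less.IH[of "fst (ps ! j)"] lt j by auto
        ultimately show "v $ j * ((if t = fst (ps ! j) then 1 else 0) - (if t = snd (ps ! j) then 1 else 0))
            = (if j = j0 then v $ j else 0)" using j0 lt by auto
      qed
      also have "\<dots> = v $ j0" using j0 by simp
      finally show "v $ j0 = 0" by simp
    qed
  qed
  thus ?thesis using v by (intro eq_vecI) auto
qed

lemma loop_vec_in_loop_span:
  assumes "p < q" "q < length w" "\<bar>w ! q\<bar> = \<bar>w ! p\<bar>"
  shows "\<exists>y \<in> carrier_vec (length (braid_loops w)).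
           loop_mat (length w) (braid_loops w) *\<^sub>v y = loop_vec (length w) (p, q)"
  using assms
proof (induction "q - p" arbitrary: p rule: less_induct)
  case less
  let ?L = "braid_loops w" and ?n = "length w"
  let ?D = "loop_mat ?n ?L"
  obtain p' where p': "is_braid_loop w p p'" "p' \<le> q" using exists_braid_loop_from[OF less.prems] by auto
  have "(p, p') \<in> set ?L" using p'(1) unfolding set_braid_loops by simp
  then obtain k where k: "k < length ?L" "?L ! k = (p, p')" by (auto simp: in_set_conv_nth)
  have Dk: "?D *\<^sub>v unit_vec (length ?L) k = loop_vec ?n (p, p')"
    using mult_mat_vec_unit_vec[OF loop_mat_carrier k(1)] col_loop_mat[OF k(1)] k(2) by simp
  show ?case
  proof (cases "p' = q")
    case True thus ?thesis using Dk by (intro bexI[of _ "unit_vec (length ?L) k"]) auto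
  next
    case False
    with p' have lt: "p < p'" "p' < q" and eq: "\<bar>w ! q\<bar> = \<bar>w ! p'\<bar>"
      using less.prems(3) unfolding is_braid_loop_def by auto
    have "q - p' < q - p" using lt by simp
    then obtain y where y: "y \<in> carrier_vec (length ?L)" "?D *\<^sub>v y = loop_vec ?n (p', q)"
      using less.hyps[of p'] lt(2) eq less.prems(2) by blast
    have "?D *\<^sub>v (unit_vec (length ?L) k + y) = ?D *\<^sub>v unit_vec (length ?L) k + ?D *\<^sub>v y"
      by (rule mult_add_distrib_mat_vec[OF loop_mat_carrier]) (use y in auto)
    also have "\<dots> = loop_vec ?n (p, q)" unfolding Dk y(2) loop_vec_def by (intro eq_vecI) auto
    finally show ?thesis using y(1) by (intro bexI[of _ "unit_vec (length ?L) k + y"]) auto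
  qed
qed

definition seifert_real :: "int list \<Rightarrow> real mat" where
  "seifert_real w = map_mat real_of_int (seifert_sym_matrix w)"

lemma seifert_sym_matrix_carrier:
  "seifert_sym_matrix w \<in> carrier_mat (length (braid_loops w)) (length (braid_loops w))"
  unfolding seifert_sym_matrix_def Let_def by simp

lemma seifert_real_carrier:
  "seifert_real w \<in> carrier_mat (length (braid_loops w)) (length (braid_loops w))"
  using seifert_sym_matrix_carrier unfolding seifert_real_def by simp

lemma seifert_real_entry:
  assumes i: "i < length (braid_loops w)" and j: "j < length (braid_loops w)"
  shows "seifert_real w $$ (i, j) = real_of_int (loop_form w (braid_loops w ! i) (braid_loops w ! j))"
proof -
  have "seifert_sym_matrix w $$ (i, j) = seifert_sym_entry w (braid_loops w ! i) (braid_loops w ! j)"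
    unfolding seifert_sym_matrix_def Let_def using i j by (subst index_mat(1)) simp_all
  thus ?thesis
    using seifert_sym_matrix_carrier[of w] i j
      seifert_sym_entry_loop_form[OF nth_mem[OF i] nth_mem[OF j]]
    unfolding seifert_real_def by (subst index_map_mat(1)) auto
qed

lemma braid_loops_in_range: "set (braid_loops w) \<subseteq> {..<length w} \<times> {..<length w}"
proof
  fix l assume "l \<in> set (braid_loops w)"
  hence "fst l < snd l \<and> snd l < length w" using braid_loop_bounds[of "fst l" "snd l" w] by simp
  thus "l \<in> {..<length w} \<times> {..<length w}" by (simp add: mem_Times_iff)
qed

lemma seifert_real_loop_congruence:
  "seifert_real w = transpose_mat (loop_mat (length w) (braid_loops w)) * band_form_mat w
                      * loop_mat (length w) (braid_loops w)"
proof (rule eq_matI)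
  let ?L = "braid_loops w"
  fix i j assume "i < dim_row (transpose_mat (loop_mat (length w) ?L) * band_form_mat w
      * loop_mat (length w) ?L)" "j < dim_col (transpose_mat (loop_mat (length w) ?L)
      * band_form_mat w * loop_mat (length w) ?L)"
  hence i: "i < length ?L" and j: "j < length ?L" using loop_mat_carrier[of "length w" ?L] by auto
  show "seifert_real w $$ (i, j) = (transpose_mat (loop_mat (length w) ?L) * band_form_mat w
      * loop_mat (length w) ?L) $$ (i, j)"
    unfolding seifert_real_entry[OF i j] congruence_band_form_mat_entry[OF i j braid_loops_in_range] ..
qed (use seifert_real_carrier[of w] loop_mat_carrier[of "length w" "braid_loops w"] in auto)

lemma seifert_real_sym: "transpose_mat (seifert_real w) = seifert_real w"
  unfolding seifert_real_loop_congruence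
  by (rule symmetric_congruence[OF band_form_mat_carrier band_form_mat_sym loop_mat_carrier])

section \<open>Inserting a braid word into another\<close>

locale braid_insertion =
  fixes \<alpha> \<gamma> \<beta> :: "int list"
begin

definition whole :: "int list" where "whole = \<alpha> @ \<gamma> @ \<beta>"

definition outer :: "int list" where "outer = \<alpha> @ \<beta>"

definition outer_pos :: "nat \<Rightarrow> nat" where
  "outer_pos a = (if a < length \<alpha> then a else a + length \<gamma>)"

definition inner_pos :: "nat \<Rightarrow> nat" where "inner_pos a = a + length \<alpha>"

definition embedded_loops :: "(nat \<times> nat) list" where
  "embedded_loops = map (map_prod outer_pos outer_pos) (braid_loops outer)
                    @ map (map_prod inner_pos inner_pos) (braid_loops \<gamma>)"

lemma length_whole: "length whole = length outer + length \<gamma>"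
  unfolding whole_def outer_def by simp

lemma whole_outer_pos: "a < length outer \<Longrightarrow> whole ! outer_pos a = outer ! a"
  unfolding whole_def outer_def outer_pos_def by (auto simp: nth_append)

lemma whole_inner_pos: "a < length \<gamma> \<Longrightarrow> whole ! inner_pos a = \<gamma> ! a"
  unfolding whole_def inner_pos_def by (auto simp: nth_append)

lemma outer_pos_less_iff: "outer_pos a < outer_pos b \<longleftrightarrow> a < b"
  unfolding outer_pos_def by auto

lemma outer_pos_eq_iff: "outer_pos a = outer_pos b \<longleftrightarrow> a = b"
  unfolding outer_pos_def by auto

lemma inner_pos_less_iff: "inner_pos a < inner_pos b \<longleftrightarrow> a < b"
  unfolding inner_pos_def by auto

lemma inner_pos_eq_iff: "inner_pos a = inner_pos b \<longleftrightarrow> a = b"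
  unfolding inner_pos_def by auto

lemma outer_pos_less_length: "a < length outer \<Longrightarrow> outer_pos a < length whole"
  unfolding outer_pos_def whole_def outer_def by auto

lemma inner_pos_less_length: "a < length \<gamma> \<Longrightarrow> inner_pos a < length whole"
  unfolding inner_pos_def whole_def by auto

lemma band_form_outer_pos:
  assumes "a < length outer" and "b < length outer"
  shows "band_form whole (outer_pos a) (outer_pos b) = band_form outer a b"
proof -
  have "whole ! outer_pos a = outer ! a" "whole ! outer_pos b = outer ! b"
    using assms by (simp_all add: whole_outer_pos)
  thus ?thesis unfolding band_form_def outer_pos_less_iff outer_pos_eq_iff by simp
qed

lemma band_form_inner_pos:
  assumes "a < length \<gamma>" and "b < length \<gamma>"
  shows "band_form whole (inner_pos a) (inner_pos b) = band_form \<gamma> a b"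
proof -
  have "whole ! inner_pos a = \<gamma> ! a" "whole ! inner_pos b = \<gamma> ! b"
    using assms by (simp_all add: whole_inner_pos)
  thus ?thesis unfolding band_form_def inner_pos_less_iff inner_pos_eq_iff by simp
qed

text \<open>All bands of \<open>\<gamma>\<close> lie on the same side of a band outside \<open>\<gamma>\<close>, so such a band sees the
  two ends of a loop of \<open>\<gamma>\<close> alike.\<close>

lemma band_form_outer_inner:
  assumes a: "a < length outer" and r: "r < length \<gamma>" and s: "s < length \<gamma>"
    and rs: "\<bar>\<gamma> ! r\<bar> = \<bar>\<gamma> ! s\<bar>"
  shows "band_form whole (outer_pos a) (inner_pos r) = band_form whole (outer_pos a) (inner_pos s)"
proof -
  have "outer_pos a < inner_pos r \<and> outer_pos a < inner_pos s
      \<or> inner_pos r < outer_pos a \<and> inner_pos s < outer_pos a"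
    using r s unfolding outer_pos_def inner_pos_def by auto
  thus ?thesis
    unfolding band_form_def whole_inner_pos[OF r] whole_inner_pos[OF s] rs by (elim disjE) simp_all
qed

lemma loop_form_outer_pos:
  assumes l1: "l1 \<in> set (braid_loops outer)" and l2: "l2 \<in> set (braid_loops outer)"
  shows "loop_form whole (map_prod outer_pos outer_pos l1) (map_prod outer_pos outer_pos l2)
           = loop_form outer l1 l2"
proof -
  obtain p q r s where pq: "l1 = (p, q)" and rs: "l2 = (r, s)" by (cases l1, cases l2)
  have "p < length outer" "q < length outer" "r < length outer" "s < length outer"
    using braid_loop_bounds[of p q outer] braid_loop_bounds[of r s outer] l1 l2 unfolding pq rs by auto
  thus ?thesis unfolding pq rs loop_form_def by (simp add: band_form_outer_pos)
qed

lemma loop_form_inner_pos: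
  assumes l1: "l1 \<in> set (braid_loops \<gamma>)" and l2: "l2 \<in> set (braid_loops \<gamma>)"
  shows "loop_form whole (map_prod inner_pos inner_pos l1) (map_prod inner_pos inner_pos l2)
           = loop_form \<gamma> l1 l2"
proof -
  obtain p q r s where pq: "l1 = (p, q)" and rs: "l2 = (r, s)" by (cases l1, cases l2)
  have "p < length \<gamma>" "q < length \<gamma>" "r < length \<gamma>" "s < length \<gamma>"
    using braid_loop_bounds[of p q \<gamma>] braid_loop_bounds[of r s \<gamma>] l1 l2 unfolding pq rs by auto
  thus ?thesis unfolding pq rs loop_form_def by (simp add: band_form_inner_pos)
qed

lemma loop_form_outer_inner:
  assumes l1: "l1 \<in> set (braid_loops outer)" and l2: "l2 \<in> set (braid_loops \<gamma>)"
  shows "loop_form whole (map_prod outer_pos outer_pos l1) (map_prod inner_pos inner_pos l2) = 0"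
proof -
  obtain p q r s where pq: "l1 = (p, q)" and rs: "l2 = (r, s)" by (cases l1, cases l2)
  have "p < length outer" "q < length outer" "r < length \<gamma>" "s < length \<gamma>" "\<bar>\<gamma> ! r\<bar> = \<bar>\<gamma> ! s\<bar>"
    using braid_loop_bounds[of p q outer] braid_loop_bounds[of r s \<gamma>] l1 l2 unfolding pq rs by auto
  hence "band_form whole (outer_pos p) (inner_pos r) = band_form whole (outer_pos p) (inner_pos s)"
    "band_form whole (outer_pos q) (inner_pos r) = band_form whole (outer_pos q) (inner_pos s)"
    using band_form_outer_inner[of p r s] band_form_outer_inner[of q r s] by simp_all
  thus ?thesis unfolding pq rs loop_form_def by simp
qed

lemma embedded_loop_bounds:
  assumes "(p, q) \<in> set embedded_loops"
  shows "p < q \<and> q < length whole \<and> \<bar>whole ! q\<bar> = \<bar>whole ! p\<bar>"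
proof -
  from assms consider
      (outer) a b where "(a, b) \<in> set (braid_loops outer)" "p = outer_pos a" "q = outer_pos b"
    | (inner) a b where "(a, b) \<in> set (braid_loops \<gamma>)" "p = inner_pos a" "q = inner_pos b"
    unfolding embedded_loops_def by auto
  thus ?thesis
  proof cases
    case outer
    with braid_loop_bounds[OF outer(1)] show ?thesis
      by (simp add: outer_pos_less_iff outer_pos_less_length whole_outer_pos)
  next
    case inner
    with braid_loop_bounds[OF inner(1)] show ?thesis
      by (simp add: inner_pos_less_iff inner_pos_less_length whole_inner_pos)
  qed
qed

lemma embedded_loops_in_range: "set embedded_loops \<subseteq> {..<length whole} \<times> {..<length whole}"
proof
  fix l assume "l \<in> set embedded_loops"
  hence "fst l < snd l \<and> snd l < length whole" using embedded_loop_bounds[of "fst l" "snd l"] by simp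
  thus "l \<in> {..<length whole} \<times> {..<length whole}" by (simp add: mem_Times_iff)
qed

lemma distinct_map_fst_embedded_loops: "distinct (map fst embedded_loops)"
proof -
  have "map fst embedded_loops
      = map outer_pos (map fst (braid_loops outer)) @ map inner_pos (map fst (braid_loops \<gamma>))"
    unfolding embedded_loops_def by simp
  moreover have "distinct (map outer_pos (map fst (braid_loops outer)))"
    using distinct_map_fst_braid_loops[of outer] by (simp add: distinct_map inj_on_def outer_pos_eq_iff)
  moreover have "distinct (map inner_pos (map fst (braid_loops \<gamma>)))"
    using distinct_map_fst_braid_loops[of \<gamma>] by (simp add: distinct_map inj_on_def inner_pos_eq_iff)
  moreover have "outer_pos a \<noteq> inner_pos b" if b: "b \<in> fst ` set (braid_loops \<gamma>)" for a b
  proof -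
    obtain q where "(b, q) \<in> set (braid_loops \<gamma>)" using b by force
    hence "b < length \<gamma>" using braid_loop_bounds[of b q \<gamma>] by simp
    thus ?thesis unfolding outer_pos_def inner_pos_def by auto
  qed
  ultimately show ?thesis by auto
qed

lemma embedded_loops_nth:
  "i < length (braid_loops outer)
    \<Longrightarrow> embedded_loops ! i = map_prod outer_pos outer_pos (braid_loops outer ! i)"
  "length (braid_loops outer) \<le> i \<Longrightarrow> i < length embedded_loops
    \<Longrightarrow> embedded_loops ! i = map_prod inner_pos inner_pos (braid_loops \<gamma> ! (i - length (braid_loops outer)))"
  unfolding embedded_loops_def by (simp_all add: nth_append)

lemma length_embedded_loops:
  "length embedded_loops = length (braid_loops outer) + length (braid_loops \<gamma>)"
  unfolding embedded_loops_def by simp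

definition seifert_block :: "real mat" where
  "seifert_block = four_block_mat (seifert_real outer)
     (0\<^sub>m (length (braid_loops outer)) (length (braid_loops \<gamma>)))
     (0\<^sub>m (length (braid_loops \<gamma>)) (length (braid_loops outer))) (seifert_real \<gamma>)"

lemma seifert_block_carrier: "seifert_block \<in> carrier_mat (length embedded_loops) (length embedded_loops)"
  using seifert_real_carrier[of outer] seifert_real_carrier[of \<gamma>]
  unfolding seifert_block_def length_embedded_loops by auto

lemma seifert_block_entry:
  assumes "i < length embedded_loops" and "j < length embedded_loops"
  defines "m \<equiv> length (braid_loops outer)"
  shows "seifert_block $$ (i, j) = (if i < m then if j < m then seifert_real outer $$ (i, j) else 0
           else if j < m then 0 else seifert_real \<gamma> $$ (i - m, j - m))"
  using assms seifert_real_carrier[of outer] seifert_real_carrier[of \<gamma>]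
  unfolding seifert_block_def length_embedded_loops by auto

lemma mat_signature_seifert_block:
  "mat_signature seifert_block = mat_signature (seifert_real outer) + mat_signature (seifert_real \<gamma>)"
  unfolding seifert_block_def
  by (rule mat_signature_four_block_diag[OF seifert_real_carrier seifert_real_sym
        seifert_real_carrier seifert_real_sym])

lemma loop_form_embedded_loops:
  assumes i: "i < length embedded_loops" and j: "j < length embedded_loops"
  shows "real_of_int (loop_form whole (embedded_loops ! i) (embedded_loops ! j)) = seifert_block $$ (i, j)"
proof -
  let ?m = "length (braid_loops outer)"
  have outer_loop: "braid_loops outer ! k \<in> set (braid_loops outer)" if "k < ?m" for k
    using that by simp
  have inner_loop: "braid_loops \<gamma> ! (k - ?m) \<in> set (braid_loops \<gamma>)"
    if "?m \<le> k" "k < length embedded_loops" for k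
    using that length_embedded_loops by simp
  consider "i < ?m" "j < ?m" | "i < ?m" "\<not> j < ?m" | "\<not> i < ?m" "j < ?m" | "\<not> i < ?m" "\<not> j < ?m"
    by blast
  thus ?thesis
  proof cases
    case 1
    thus ?thesis unfolding seifert_block_entry[OF i j] using outer_loop
      by (simp add: embedded_loops_nth loop_form_outer_pos seifert_real_entry)
  next
    case 2
    thus ?thesis unfolding seifert_block_entry[OF i j] using outer_loop inner_loop j
      by (simp add: embedded_loops_nth loop_form_outer_inner)
  next
    case 3
    thus ?thesis unfolding seifert_block_entry[OF i j] loop_form_sym[of whole "embedded_loops ! i"]
      using outer_loop inner_loop i by (simp add: embedded_loops_nth loop_form_outer_inner)
  next
    case 4
    moreover have "i - ?m < length (braid_loops \<gamma>)" "j - ?m < length (braid_loops \<gamma>)"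
      using 4 i j length_embedded_loops by auto
    ultimately show ?thesis unfolding seifert_block_entry[OF i j] using inner_loop i j
      by (simp add: embedded_loops_nth loop_form_inner_pos seifert_real_entry)
  qed
qed

lemma embedded_loops_congruence:
  "transpose_mat (loop_mat (length whole) embedded_loops) * band_form_mat whole
     * loop_mat (length whole) embedded_loops = seifert_block"
proof (rule eq_matI)
  fix i j assume "i < dim_row seifert_block" "j < dim_col seifert_block"
  hence i: "i < length embedded_loops" and j: "j < length embedded_loops"
    using seifert_block_carrier by auto
  show "(transpose_mat (loop_mat (length whole) embedded_loops) * band_form_mat whole
      * loop_mat (length whole) embedded_loops) $$ (i, j) = seifert_block $$ (i, j)"
    unfolding congruence_band_form_mat_entry[OF i j embedded_loops_in_range]
    by (rule loop_form_embedded_loops[OF i j])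
qed (use seifert_block_carrier loop_mat_carrier[of "length whole" embedded_loops] in auto)

lemma embedded_loops_in_loop_span:
  "\<exists>P \<in> carrier_mat (length (braid_loops whole)) (length embedded_loops).
     loop_mat (length whole) (braid_loops whole) * P = loop_mat (length whole) embedded_loops"
proof (rule exists_mat_mult_eq_if_cols_in_range[OF loop_mat_carrier loop_mat_carrier])
  fix j assume j: "j < length embedded_loops"
  obtain p q where pq: "embedded_loops ! j = (p, q)" by (cases "embedded_loops ! j")
  hence "p < q \<and> q < length whole \<and> \<bar>whole ! q\<bar> = \<bar>whole ! p\<bar>"
    using embedded_loop_bounds nth_mem[OF j] by simp
  thus "\<exists>y \<in> carrier_vec (length (braid_loops whole)).
      loop_mat (length whole) (braid_loops whole) *\<^sub>v y = col (loop_mat (length whole) embedded_loops) j"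
    using loop_vec_in_loop_span[of p q whole] col_loop_mat[OF j] pq by simp
qed

text \<open>\<open>P\<close> expresses the embedded loops in the loop basis of \<open>whole\<close>.\<close>

lemma seifert_real_whole_congruence:
  "\<exists>P \<in> carrier_mat (length (braid_loops whole)) (length embedded_loops).
     (\<forall>v \<in> carrier_vec (length embedded_loops).
        P *\<^sub>v v = 0\<^sub>v (length (braid_loops whole)) \<longrightarrow> v = 0\<^sub>v (length embedded_loops)) \<and>
     transpose_mat P * seifert_real whole * P = seifert_block"
proof -
  let ?D = "loop_mat (length whole) (braid_loops whole)"
  let ?E = "loop_mat (length whole) embedded_loops"
  obtain P where P: "P \<in> carrier_mat (length (braid_loops whole)) (length embedded_loops)"
    and DP: "?D * P = ?E"
    using embedded_loops_in_loop_span by blast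
  have "v = 0\<^sub>v (length embedded_loops)"
    if v: "v \<in> carrier_vec (length embedded_loops)" "P *\<^sub>v v = 0\<^sub>v (length (braid_loops whole))" for v
  proof (rule loop_mat_inj[OF _ distinct_map_fst_embedded_loops v(1)])
    show "p < q \<and> q < length whole" if "(p, q) \<in> set embedded_loops" for p q
      using embedded_loop_bounds[OF that] by simp
    have "?E *\<^sub>v v = ?D *\<^sub>v (P *\<^sub>v v)" unfolding DP[symmetric] using P v(1)
      by (simp add: assoc_mult_mat_vec[OF loop_mat_carrier])
    also have "\<dots> = 0\<^sub>v (length whole)"
      unfolding v(2) using loop_mat_carrier[of "length whole" "braid_loops whole"]
      by (intro eq_vecI) auto
    finally show "?E *\<^sub>v v = 0\<^sub>v (length whole)" .
  qed
  moreover have "transpose_mat P * seifert_real whole * P = transpose_mat ?E * band_form_mat whole * ?E"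
    unfolding seifert_real_loop_congruence[of whole] DP[symmetric]
    by (rule congruence_mult[OF P loop_mat_carrier band_form_mat_carrier])
  ultimately show ?thesis using P embedded_loops_congruence by auto
qed

lemma length_braid_loops_whole:
  "length (braid_loops whole) = length embedded_loops + card (abs ` set outer \<inter> abs ` set \<gamma>)"
proof -
  have "abs ` set whole = abs ` set outer \<union> abs ` set \<gamma>"
    unfolding whole_def outer_def by auto
  hence "card (abs ` set whole) + card (abs ` set outer \<inter> abs ` set \<gamma>)
      = card (abs ` set outer) + card (abs ` set \<gamma>)"
    using card_Un_Int[of "abs ` set outer" "abs ` set \<gamma>"] by simp
  moreover note length_braid_loops[of whole] length_braid_loops[of outer] length_braid_loops[of \<gamma>]
    length_whole length_embedded_loops
  ultimately show ?thesis by linarith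
qed

end

theorem braid_signature_insertion_bound:
  "\<bar>braid_signature (\<alpha> @ \<gamma> @ \<beta>) - braid_signature (\<alpha> @ \<beta>) - braid_signature \<gamma>\<bar>
     \<le> int (card (abs ` set (\<alpha> @ \<beta>) \<inter> abs ` set \<gamma>))"
proof -
  interpret braid_insertion \<alpha> \<gamma> \<beta> .
  obtain P where P: "P \<in> carrier_mat (length (braid_loops whole)) (length embedded_loops)"
    and P_inj: "\<And>v. v \<in> carrier_vec (length embedded_loops)
      \<Longrightarrow> P *\<^sub>v v = 0\<^sub>v (length (braid_loops whole)) \<Longrightarrow> v = 0\<^sub>v (length embedded_loops)"
    and P_block: "transpose_mat P * seifert_real whole * P = seifert_block"
    using seifert_real_whole_congruence by blast
  have "\<bar>mat_signature seifert_block - mat_signature (seifert_real whole)\<bar>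
      \<le> int (length (braid_loops whole)) - int (length embedded_loops)"
    using mat_signature_congruence_bound[OF seifert_real_carrier seifert_real_sym P P_inj]
    unfolding P_block .
  moreover have "braid_signature w = mat_signature (seifert_real w)" for w
    unfolding braid_signature_def seifert_real_def ..
  ultimately show ?thesis
    using length_braid_loops_whole mat_signature_seifert_block
    unfolding whole_def outer_def abs_le_iff by fastforce
qed

lemma abs_set_braid_word: "braid_word b w \<Longrightarrow> abs ` set w \<subseteq> {1..int b - 1}"
  unfolding braid_word_def by auto

theorem mainTheorem10:
  fixes b :: nat and \<alpha> \<beta> \<gamma> :: "int list"
  assumes "b \<ge> 1"
    and "braid_word b \<alpha>" and "braid_word b \<beta>" and "braid_word b \<gamma>"
  shows "\<bar>braid_signature (\<alpha> @ \<gamma> @ \<beta>) - braid_signature (\<alpha> @ \<beta>) - braid_signature \<gamma>\<bar>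
           \<le> int b - 1"
proof -
  have "card (abs ` set (\<alpha> @ \<beta>) \<inter> abs ` set \<gamma>) \<le> card {1..int b - 1}"
    using abs_set_braid_word[OF assms(4)] by (intro card_mono) auto
  thus ?thesis using braid_signature_insertion_bound[of \<alpha> \<gamma> \<beta>] assms(1) by simp
qed

end
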